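(* Let $X=\prod_{p=1}^{n_0}X_p$ where each $X_p$ is a compact metric space of finite topological dimension $d_p$, and set $M=\sum_{p=1}^{n_0}d_p$. Let $\psi_{pq}:X_p\to[0,1]$ ($p=1,\dots,n_0$, $q=1,\dots,2M+1$) be continuous functions such that every $f\in C(X)$ can be written as $f(x_1,\dots,x_{n_0})=\sum_{q=1}^{2M+1}h_q\big(\sum_{p=1}^{n_0}\psi_{pq}(x_p)\big)$ with $h_q\in C(\mathbb{R})$, and set $s_q(x_1,\dots,x_{n_0})=\sum_{p=1}^{n_0}\psi_{pq}(x_p)$ and $F=(s_1,\dots,s_{2M+1}):X\to\mathbb{R}^{2M+1}$. Let $\mathcal{A}(X)\subset C(X)$ be a feature family containing $s_1,\dots,s_{2M+1}$. Assume $\sigma:\mathbb{R}\to\mathbb{R}$ is continuous and nonaffine, and that there exist $t_0\in\mathbb{R}$ and an open neighborhood $U$ of $t_0$ such that $\sigma$ is differentiable on $U$ and $\sigma'$ is continuous at $t_0$ with $\sigma'(t_0)\neq0$. Then for every $m\ge1$, every compact $K\subset X$, every $g\in C(K;\mathbb{R}^m)$ and every $\varepsilon>0$ there is $H\in\mathcal{N}^{(2M+m+3,m)}(X,\sigma;F)$ with $\sup_{x\in K}\|g(x)-H(x)\|_{\mathbb{R}^m}<\varepsilon$.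
   Context: Ostrand's extension of the Kolmogorov superposition theorem guarantees that functions $\psi_{pq}$ as in the claim exist. A classical deep feedforward network $\Phi:\mathbb{R}^n\to\mathbb{R}^m$ with activation $\sigma$ is a map $\Phi=T_{l+1}\circ\sigma\circ T_l\circ\cdots\circ\sigma\circ T_0$ with affine maps $T_0:\mathbb{R}^n\to\mathbb{R}^{k_0}$, $T_j:\mathbb{R}^{k_{j-1}}\to\mathbb{R}^{k_j}$, $T_{l+1}:\mathbb{R}^{k_l}\to\mathbb{R}^m$, $\sigma$ acting componentwise; its width is $\max_j k_j$, with arbitrary depth $l$. For $F=(f_1,\dots,f_n)$ with $f_i\in\mathcal{A}(X)$, $k\in\mathbb{N}$ and $m\ge1$, $\mathcal{N}^{(k,m)}(X,\sigma;F)$ denotes the set of all $H:X\to\mathbb{R}^m$ of the form $H=\Phi\circ F$ where $\Phi:\mathbb{R}^n\to\mathbb{R}^m$ is a classical deep feedforward network with activation $\sigma$ and width at most $k$. *)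

theory Defs
  imports "HOL-Analysis.Analysis"
begin

definition covering_dim_le :: "'a::topological_space set \<Rightarrow> nat \<Rightarrow> bool" where
  "covering_dim_le S d \<longleftrightarrow>
     (\<forall>\<U>. finite \<U> \<and> (\<forall>U\<in>\<U>. openin (top_of_set S) U) \<and> S \<subseteq> \<Union>\<U> \<longrightarrow>
        (\<exists>\<V>. finite \<V> \<and> (\<forall>V\<in>\<V>. openin (top_of_set S) V) \<and> S \<subseteq> \<Union>\<V> \<and>
             (\<forall>V\<in>\<V>. \<exists>U\<in>\<U>. V \<subseteq> U) \<and>
             (\<forall>x\<in>S. card {V\<in>\<V>. x \<in> V} \<le> d + 1)))"

definition has_top_dim :: "'a::topological_space set \<Rightarrow> nat \<Rightarrow> bool" where
  "has_top_dim S d \<longleftrightarrow> covering_dim_le S d \<and> (\<forall>d'<d. \<not> covering_dim_le S d')"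

text \<open>Vectors in R^k are represented as functions nat => real, with
components outside {..<k} equal to 0.\<close>

definition affine_map ::
  "(nat \<Rightarrow> nat \<Rightarrow> real) \<Rightarrow> (nat \<Rightarrow> real) \<Rightarrow> nat \<Rightarrow> nat \<Rightarrow> (nat \<Rightarrow> real) \<Rightarrow> (nat \<Rightarrow> real)" where
  "affine_map W b n k x = (\<lambda>i. if i < k then (\<Sum>j<n. W i j * x j) + b i else 0)"

text \<open>Hidden part sigma o T_l o ... o sigma o T_0; each layer is (W, b, output dimension).\<close>
fun hidden_eval ::
  "(real \<Rightarrow> real) \<Rightarrow> nat \<Rightarrow> ((nat \<Rightarrow> nat \<Rightarrow> real) \<times> (nat \<Rightarrow> real) \<times> nat) list
     \<Rightarrow> (nat \<Rightarrow> real) \<Rightarrow> (nat \<Rightarrow> real)" where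
  "hidden_eval \<sigma> n [] x = x"
| "hidden_eval \<sigma> n ((W, b, k) # Ls) x =
     hidden_eval \<sigma> k Ls (\<lambda>i. if i < k then \<sigma> (affine_map W b n k x i) else 0)"

definition is_network ::
  "(real \<Rightarrow> real) \<Rightarrow> nat \<Rightarrow> nat \<Rightarrow> nat \<Rightarrow> ((nat \<Rightarrow> real) \<Rightarrow> (nat \<Rightarrow> real)) \<Rightarrow> bool" where
  "is_network \<sigma> n m k \<Phi> \<longleftrightarrow>
     (\<exists>Ls Wo bo. Ls \<noteq> [] \<and> (\<forall>(W, b, kj)\<in>set Ls. kj \<le> k) \<and>
        \<Phi> = (\<lambda>x. affine_map Wo bo (snd (snd (last Ls))) m (hidden_eval \<sigma> n Ls x)))"

definition NN ::
  "nat \<Rightarrow> nat \<Rightarrow> 'x set \<Rightarrow> (real \<Rightarrow> real) \<Rightarrow> nat \<Rightarrow> ('x \<Rightarrow> (nat \<Rightarrow> real)) \<Rightarrow> ('x \<Rightarrow> (nat \<Rightarrow> real)) set" where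
  "NN k m X \<sigma> n F = {H. \<exists>\<Phi>. is_network \<sigma> n m k \<Phi> \<and> (\<forall>x\<in>X. H x = \<Phi> (F x))}"

definition euclid_norm :: "nat \<Rightarrow> (nat \<Rightarrow> real) \<Rightarrow> real" where
  "euclid_norm m v = sqrt (\<Sum>i<m. (v i)\<^sup>2)"

end

theory Submission
  imports Defs
begin

text \<open>Extend each component of \<open>g\<close> from \<open>K\<close> to the product by Tietze's theorem and write it, by
  the representation hypothesis, as \<open>\<Sum>q. h\<^sub>q (s\<^sub>q x)\<close>; approximating the outer functions \<open>h\<^sub>q\<close> by
  polynomials reduces the theorem to approximating \<open>y \<mapsto> \<Sum>q. p\<^sub>i\<^sub>q (y\<^sub>q)\<close> on a cube of the feature
  space \<open>\<real>\<^sup>n\<close>, \<open>n = 2M + 1\<close>, by a network of width \<open>n + m + 2\<close>.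

  Such networks are composed of width-preserving approximations of operations on \<open>n + m + 2\<close>
  registers (inputs, outputs, a Horner accumulator and a scratch register). Setting one register
  to an affine form, or to \<open>\<sigma>\<close> of it, costs one hidden layer, all other registers being carried
  through the almost linear behaviour of \<open>\<sigma>\<close> near \<open>t0\<close>. Adding a multiple of the square of an affine
  form is a finite sequence of such updates: a continuous nonaffine \<open>\<sigma>\<close> has a nonvanishing second
  difference, and squares are rescaled central differences of a discrete second antiderivative of
  it. Products, and with them Horner's scheme, follow from \<open>a b = ((a + b)\<^sup>2 - (a - b)\<^sup>2) / 4\<close>.\<close>

section \<open>Composition and restriction of networks\<close>

definition hidden_out_dim :: "nat \<Rightarrow> ((nat \<Rightarrow> nat \<Rightarrow> real) \<times> (nat \<Rightarrow> real) \<times> nat) list \<Rightarrow> nat" where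
  "hidden_out_dim n Ls = (if Ls = [] then n else snd (snd (last Ls)))"

lemma hidden_eval_append:
  "hidden_eval \<sigma> n (Ls1 @ Ls2) x = hidden_eval \<sigma> (hidden_out_dim n Ls1) Ls2 (hidden_eval \<sigma> n Ls1 x)"
proof (induction Ls1 arbitrary: n x)
  case Nil
  then show ?case by (simp add: hidden_out_dim_def)
next
  case (Cons L Ls1)
  obtain W b k where "L = (W, b, k)" by (cases L) auto
  then show ?case using Cons by (cases Ls1) (auto simp: hidden_out_dim_def)
qed

lemma affine_map_comp:
  "affine_map W b k k1 (affine_map Wo bo kl k z) =
   affine_map (\<lambda>i j. \<Sum>l<k. W i l * Wo l j) (\<lambda>i. (\<Sum>l<k. W i l * bo l) + b i) kl k1 z"
proof (rule ext)
  fix i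
  have "(\<Sum>j<k. W i j * affine_map Wo bo kl k z j)
      = (\<Sum>j<k. \<Sum>l<kl. W i j * Wo j l * z l) + (\<Sum>j<k. W i j * bo j)"
    by (simp add: affine_map_def distrib_left sum.distrib sum_distrib_left mult.assoc)
  also have "\<dots> = (\<Sum>l<kl. (\<Sum>j<k. W i j * Wo j l) * z l) + (\<Sum>j<k. W i j * bo j)"
    by (subst sum.swap) (simp add: sum_distrib_right)
  finally show "affine_map W b k k1 (affine_map Wo bo kl k z) i =
      affine_map (\<lambda>i j. \<Sum>l<k. W i l * Wo l j) (\<lambda>i. (\<Sum>l<k. W i l * bo l) + b i) kl k1 z i"
    by (simp add: affine_map_def)
qed

text \<open>The output layer of the first network is merged into the input layer of the second one,
  so composition does not increase the width.\<close>

lemma is_network_comp: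
  assumes "is_network \<sigma> n k w \<Phi>1" "is_network \<sigma> k m w \<Phi>2"
  shows "is_network \<sigma> n m w (\<lambda>x. \<Phi>2 (\<Phi>1 x))"
proof -
  obtain Ls1 Wo1 bo1 where 1: "Ls1 \<noteq> []" "\<forall>(W, b, kj)\<in>set Ls1. kj \<le> w"
    "\<Phi>1 = (\<lambda>x. affine_map Wo1 bo1 (snd (snd (last Ls1))) k (hidden_eval \<sigma> n Ls1 x))"
    using assms(1) unfolding is_network_def by blast
  obtain Ls2 Wo2 bo2 where 2: "Ls2 \<noteq> []" "\<forall>(W, b, kj)\<in>set Ls2. kj \<le> w"
    "\<Phi>2 = (\<lambda>x. affine_map Wo2 bo2 (snd (snd (last Ls2))) m (hidden_eval \<sigma> k Ls2 x))"
    using assms(2) unfolding is_network_def by blast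
  obtain W b k1 Ls2' where Ls2: "Ls2 = (W, b, k1) # Ls2'"
    using 2(1) by (metis list.exhaust prod_cases3)
  define Ls where "Ls = Ls1 @ (\<lambda>i j. \<Sum>l<k. W i l * Wo1 l j, \<lambda>i. (\<Sum>l<k. W i l * bo1 l) + b i, k1) # Ls2'"
  have last_Ls: "snd (snd (last Ls)) = snd (snd (last Ls2))"
    by (cases Ls2') (auto simp: Ls_def Ls2)
  have merge: "affine_map W b k k1 (\<Phi>1 x) = affine_map (\<lambda>i j. \<Sum>l<k. W i l * Wo1 l j)
      (\<lambda>i. (\<Sum>l<k. W i l * bo1 l) + b i) (snd (snd (last Ls1))) k1 (hidden_eval \<sigma> n Ls1 x)" for x
    unfolding 1(3) by (rule affine_map_comp)
  have "hidden_eval \<sigma> n Ls x = hidden_eval \<sigma> k Ls2 (\<Phi>1 x)" for x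
    using 1(1) unfolding Ls2 hidden_eval.simps merge by (simp add: Ls_def hidden_eval_append hidden_out_dim_def)
  then have "\<Phi>2 (\<Phi>1 x) = affine_map Wo2 bo2 (snd (snd (last Ls))) m (hidden_eval \<sigma> n Ls x)" for x
    by (simp add: 2(3) last_Ls)
  moreover have "Ls \<noteq> []" "\<forall>(W, b, kj)\<in>set Ls. kj \<le> w"
    using 1(2) 2(2) by (auto simp: Ls_def Ls2)
  ultimately show ?thesis unfolding is_network_def by blast
qed

lemma is_network_out_zero: "is_network \<sigma> n m w \<Phi> \<Longrightarrow> m \<le> i \<Longrightarrow> \<Phi> x i = 0"
  unfolding is_network_def affine_map_def by auto

lemma hidden_eval_input_dim:
  assumes "n \<le> k" "\<And>j. n \<le> j \<Longrightarrow> y j = 0"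
  shows "hidden_eval \<sigma> n Ls y = hidden_eval \<sigma> k Ls y"
proof (cases Ls)
  case (Cons L Ls')
  obtain W b k1 where L: "L = (W, b, k1)" by (cases L) auto
  have "(\<Sum>j<k. W i j * y j) = (\<Sum>j<n. W i j * y j)" for i
    by (rule sum.mono_neutral_right) (use assms in auto)
  then have eq: "affine_map W b n k1 y = affine_map W b k k1 y"
    unfolding affine_map_def by presburger
  show ?thesis unfolding Cons L hidden_eval.simps eq ..
qed simp

lemma is_network_restrict:
  assumes "is_network \<sigma> k k' w \<Phi>" "n \<le> k" "l + m \<le> k'"
  shows "\<exists>\<Phi>'. is_network \<sigma> n m w \<Phi>' \<and>
           (\<forall>y. (\<forall>j\<ge>n. y j = 0) \<longrightarrow> (\<forall>i<m. \<Phi>' y i = \<Phi> y (l + i)))"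
proof -
  obtain Ls Wo bo where Ls: "Ls \<noteq> []" "\<forall>(W, b, kj)\<in>set Ls. kj \<le> w"
    "\<Phi> = (\<lambda>x. affine_map Wo bo (snd (snd (last Ls))) k' (hidden_eval \<sigma> k Ls x))"
    using assms(1) unfolding is_network_def by blast
  define \<Phi>' where "\<Phi>' x = affine_map (\<lambda>i. Wo (l + i)) (\<lambda>i. bo (l + i)) (snd (snd (last Ls))) m
      (hidden_eval \<sigma> n Ls x)" for x
  have "is_network \<sigma> n m w \<Phi>'"
    unfolding is_network_def \<Phi>'_def[abs_def] using Ls by blast
  moreover have "\<Phi>' y i = \<Phi> y (l + i)" if "\<forall>j\<ge>n. y j = 0" "i < m" for y i
    using that assms(2,3) hidden_eval_input_dim[of n k y \<sigma> Ls]
    by (simp add: \<Phi>'_def Ls(3) affine_map_def)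
  ultimately show ?thesis by blast
qed

section \<open>Second differences\<close>

lemma affine_if_second_diff_zero:
  fixes f :: "real \<Rightarrow> real"
  assumes cont: "continuous_on UNIV f"
    and zero: "\<And>x h. f (x + 2 * h) - 2 * f (x + h) + f x = 0"
  shows "\<exists>a b. \<forall>t. f t = a * t + b"
proof -
  define g where "g t = f t - f 0 - (f 1 - f 0) * t" for t
  have g_zero: "g (x + 2 * h) - 2 * g (x + h) + g x = 0" for x h
    using zero[of x h] by (simp add: g_def algebra_simps)
  have g_mult: "g (real k * h) = real k * g h \<and> g (real (Suc k) * h) = real (Suc k) * g h" for k h
  proof (induction k)
    case 0
    then show ?case by (simp add: g_def)
  next
    case (Suc k)
    have "g (real (Suc (Suc k)) * h) = 2 * g (real (Suc k) * h) - g (real k * h)"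
      using g_zero[of "real k * h" h] by (simp add: algebra_simps)
    with Suc show ?case by (simp add: algebra_simps)
  qed
  have g_minus: "g (- h) = - g h" for h
    using g_zero[of "- h" h] by (simp add: g_def)
  have g_Rats: "g t = 0" if "t \<in> \<rat>" for t
  proof -
    obtain j :: int and N :: nat where N: "N > 0" and t: "t = real_of_int j / real N"
      using \<open>t \<in> \<rat>\<close> by (metis Rats_cases' of_int_of_nat_eq zero_less_imp_eq_int of_nat_0_less_iff)
    have unit: "g (1 / real N) = 0"
      using g_mult[of N "1 / real N"] N by (simp add: g_def)
    have "g (real n * (1 / real N)) = 0" for n
      using g_mult[of n "1 / real N"] unit by simp
    moreover have "t = real (nat j) * (1 / real N) \<or> t = - (real (nat (- j)) * (1 / real N))"
      using t by (cases "j \<ge> 0") simp_all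
    ultimately show ?thesis using g_minus by fastforce
  qed
  have "closed {t. g t = 0}"
    unfolding g_def by (intro closed_Collect_eq continuous_intros cont)
  then have "closure \<rat> \<subseteq> {t. g t = 0}"
    using g_Rats by (intro closure_minimal) auto
  then have "g t = 0" for t
    by (auto simp: Rats_closure_real)
  then show ?thesis
    by (intro exI[of _ "f 1 - f 0"] exI[of _ "f 0"]) (simp add: g_def algebra_simps)
qed

text \<open>With \<open>c = 1 / N\<close>, \<open>double_grid_sum f N c\<close> is a discrete second antiderivative, with step \<open>c\<close>,
  of \<open>second_diff f\<close>; hence \<open>c\<^sup>2 * central_diff (double_grid_sum f N c) v \<approx> v\<^sup>2 * second_diff f 0\<close>,
  which is how squares are produced from finitely many translates of \<open>f\<close>.\<close>

definition second_diff :: "(real \<Rightarrow> real) \<Rightarrow> real \<Rightarrow> real" where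
  "second_diff f z = f (z + 2) - 2 * f (z + 1) + f z"

definition double_grid_sum :: "(real \<Rightarrow> real) \<Rightarrow> nat \<Rightarrow> real \<Rightarrow> real \<Rightarrow> real" where
  "double_grid_sum f N c z = (\<Sum>j<N. \<Sum>k<N. f (z + real (j + k) * c))"

definition grid_increment_sum :: "(real \<Rightarrow> real) \<Rightarrow> nat \<Rightarrow> real \<Rightarrow> real \<Rightarrow> real" where
  "grid_increment_sum f N c z = (\<Sum>j<N. f (z + real j * c + 1) - f (z + real j * c))"

definition central_diff :: "(real \<Rightarrow> real) \<Rightarrow> real \<Rightarrow> real" where
  "central_diff A v = A v + A (- v) - 2 * A 0"

lemma central_diff_minus [simp]: "central_diff A (- v) = central_diff A v"
  by (simp add: central_diff_def)

lemma sum_grid_telescope: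
  fixes G :: "real \<Rightarrow> real"
  shows "G (w + real p * c) - G w = (\<Sum>i<p. G (w + real i * c + c) - G (w + real i * c))"
  using sum_lessThan_telescope[of "\<lambda>i. G (w + real i * c)" p] by (simp add: algebra_simps)

lemma double_grid_sum_step:
  assumes "real N * c = 1"
  shows "double_grid_sum f N c (z + c) - double_grid_sum f N c z = grid_increment_sum f N c z"
proof -
  have "double_grid_sum f N c (z + c) - double_grid_sum f N c z =
        (\<Sum>j<N. \<Sum>k<N. f (z + real j * c + real k * c + c) - f (z + real j * c + real k * c))"
    unfolding double_grid_sum_def by (simp add: sum_subtractf algebra_simps)
  also have "\<dots> = (\<Sum>j<N. f (z + real j * c + real N * c) - f (z + real j * c))"
    by (simp add: sum_grid_telescope)
  finally show ?thesis using assms by (simp add: grid_increment_sum_def)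
qed

lemma grid_increment_sum_step:
  assumes "real N * c = 1"
  shows "grid_increment_sum f N c (z + c) - grid_increment_sum f N c z = second_diff f z"
proof -
  have "grid_increment_sum f N c (z + c) - grid_increment_sum f N c z =
     (\<Sum>j<N. f ((z + 1) + real j * c + c) - f ((z + 1) + real j * c)) -
     (\<Sum>j<N. f (z + real j * c + c) - f (z + real j * c))"
    unfolding grid_increment_sum_def by (simp add: sum_subtractf algebra_simps)
  also have "\<dots> = (f ((z + 1) + real N * c) - f (z + 1)) - (f (z + real N * c) - f z)"
    by (simp only: sum_grid_telescope)
  finally show ?thesis using assms by (simp add: second_diff_def algebra_simps)
qed

lemma central_diff_double_grid_sum:
  assumes "real N * c = 1"
  shows "central_diff (double_grid_sum f N c) (real p * c) =
    (\<Sum>i<p. \<Sum>l<p. second_diff f (- (real p * c) + real i * c + real l * c))"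
proof -
  let ?A = "double_grid_sum f N c" and ?B = "grid_increment_sum f N c"
  have "?A (real p * c) - ?A 0 = (\<Sum>i<p. ?B (real i * c))"
    using sum_grid_telescope[of ?A 0 p c] by (simp add: double_grid_sum_step[OF assms])
  moreover have "?A 0 - ?A (- (real p * c)) = (\<Sum>i<p. ?B (- (real p * c) + real i * c))"
    using sum_grid_telescope[of ?A "- (real p * c)" p c] by (simp add: double_grid_sum_step[OF assms])
  ultimately have "central_diff ?A (real p * c) =
      (\<Sum>i<p. ?B (real i * c) - ?B (- (real p * c) + real i * c))"
    by (simp add: central_diff_def sum_subtractf)
  also have "\<dots> = (\<Sum>i<p. \<Sum>l<p. second_diff f (- (real p * c) + real i * c + real l * c))"
    using sum_grid_telescope[of ?B "- (real p * c) + real _ * c" p c]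
    by (simp add: grid_increment_sum_step[OF assms])
  finally show ?thesis .
qed

lemma double_grid_sum_modulus:
  assumes Nc: "real N * c = 1" and c: "c > 0"
    and \<omega>: "\<And>z z'. z \<in> {-2..4} \<Longrightarrow> z' \<in> {-2..4} \<Longrightarrow> \<bar>z - z'\<bar> \<le> c \<Longrightarrow> \<bar>f z - f z'\<bar> \<le> \<omega>"
    and y: "\<bar>y\<bar> \<le> 1" "\<bar>y'\<bar> \<le> 1" "\<bar>y - y'\<bar> \<le> c"
  shows "\<bar>double_grid_sum f N c y - double_grid_sum f N c y'\<bar> \<le> real N * real N * \<omega>"
proof -
  have term_bound: "\<bar>f (y + real (j + k) * c) - f (y' + real (j + k) * c)\<bar> \<le> \<omega>"
    if "j < N" "k < N" for j k
  proof -
    have "real (j + k) * c \<le> 2 * real N * c"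
      using that c by (intro mult_right_mono) auto
    then have "0 \<le> real (j + k) * c" "real (j + k) * c \<le> 2"
      using Nc c by (simp_all add: mult.assoc)
    moreover have "z + t \<in> {-2..4}" if "\<bar>z\<bar> \<le> 1" "0 \<le> t" "t \<le> 2" for z t :: real
      using that by auto
    ultimately show ?thesis
      using y by (intro \<omega>) auto
  qed
  have "\<bar>double_grid_sum f N c y - double_grid_sum f N c y'\<bar> \<le>
      (\<Sum>j<N. \<Sum>k<N. \<bar>f (y + real (j + k) * c) - f (y' + real (j + k) * c)\<bar>)"
    unfolding double_grid_sum_def sum_subtractf[symmetric]
    by (rule order_trans[OF sum_abs sum_mono[OF sum_abs]])
  also have "\<dots> \<le> (\<Sum>j<N. \<Sum>k<N. \<omega>)"
    by (intro sum_mono term_bound) auto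
  finally show ?thesis by simp
qed

lemma central_diff_double_grid_sum_grid_point:
  assumes Nc: "real N * c = 1" and c: "c > 0" and pr: "real p * c \<le> r"
    and \<kappa>: "\<And>w. \<bar>w\<bar> \<le> r \<Longrightarrow> \<bar>second_diff f w - D\<bar> \<le> \<kappa>"
  shows "\<bar>central_diff (double_grid_sum f N c) (real p * c) - real p * real p * D\<bar> \<le> real p * real p * \<kappa>"
proof -
  have term_bound: "\<bar>second_diff f (- (real p * c) + real i * c + real l * c) - D\<bar> \<le> \<kappa>"
    if "i < p" "l < p" for i l
  proof -
    have "real i * c \<le> real p * c" "real l * c \<le> real p * c"
      using that c by (auto intro: mult_right_mono)
    moreover have "0 \<le> real i * c" "0 \<le> real l * c" using c by auto
    ultimately show ?thesis using pr by (intro \<kappa>) (simp add: abs_le_iff)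
  qed
  have "\<bar>central_diff (double_grid_sum f N c) (real p * c) - real p * real p * D\<bar> \<le>
      (\<Sum>i<p. \<Sum>l<p. \<bar>second_diff f (- (real p * c) + real i * c + real l * c) - D\<bar>)"
    unfolding central_diff_double_grid_sum[OF Nc]
    by (rule order_trans[OF _ order_trans[OF sum_abs sum_mono[OF sum_abs]]]) (simp add: sum_subtractf)
  also have "\<dots> \<le> (\<Sum>i<p. \<Sum>l<p. \<kappa>)"
    by (intro sum_mono term_bound) auto
  finally show ?thesis by simp
qed

lemma square_diff_bound:
  fixes u v :: real
  assumes "0 \<le> u" "u \<le> v" "v \<le> r" "v - u \<le> c"
  shows "\<bar>u\<^sup>2 * D - v\<^sup>2 * D\<bar> \<le> 2 * r * c * \<bar>D\<bar>"
proof -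
  have "u\<^sup>2 * D - v\<^sup>2 * D = - ((v - u) * (v + u) * D)"
    by (simp add: power2_eq_square algebra_simps)
  then have "\<bar>u\<^sup>2 * D - v\<^sup>2 * D\<bar> = \<bar>v - u\<bar> * \<bar>v + u\<bar> * \<bar>D\<bar>"
    by (simp only: abs_minus_cancel abs_mult)
  also have "\<dots> = (v - u) * (v + u) * \<bar>D\<bar>"
    using assms(1,2) by simp
  also have "\<dots> \<le> c * (2 * r) * \<bar>D\<bar>"
    using assms by (intro mult_right_mono mult_mono) auto
  finally show ?thesis by (simp only: mult_ac)
qed

lemma exists_grid_step: "d > 0 \<Longrightarrow> \<exists>N c. real N * c = 1 \<and> 0 < c \<and> c < d"
proof -
  assume "d > 0"
  obtain N :: nat where N: "1 / d < real N"
    using reals_Archimedean2 by blast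
  then have "real N > 0" using \<open>d > 0\<close> by (smt (verit) divide_pos_pos)
  then show ?thesis
    using N \<open>d > 0\<close> by (intro exI[of _ N] exI[of _ "1 / real N"]) (simp add: field_simps)
qed

text \<open>Round \<open>v\<close> down to the grid point \<open>p * c\<close>: the rounding costs \<open>2 \<omega>\<close>, the second differences
  deviate by at most \<open>\<kappa>\<close> from \<open>D\<close>, and \<open>v\<^sup>2 - (p * c)\<^sup>2 \<le> 2 r c\<close>.\<close>

lemma central_diff_double_grid_sum_approx:
  assumes Nc: "real N * c = 1" and c: "c > 0" and r: "0 < r" "r \<le> 1"
    and \<omega>: "\<And>z z'. z \<in> {-2..4} \<Longrightarrow> z' \<in> {-2..4} \<Longrightarrow> \<bar>z - z'\<bar> \<le> c \<Longrightarrow> \<bar>f z - f z'\<bar> \<le> \<omega>"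
    and \<kappa>: "\<And>w. \<bar>w\<bar> \<le> r \<Longrightarrow> \<bar>second_diff f w - D\<bar> \<le> \<kappa>"
    and v: "0 \<le> v" "v \<le> r"
  shows "\<bar>c\<^sup>2 * central_diff (double_grid_sum f N c) v - v\<^sup>2 * D\<bar> \<le> 2 * \<omega> + r\<^sup>2 * \<kappa> + 2 * r * c * \<bar>D\<bar>"
proof -
  let ?E = "central_diff (double_grid_sum f N c)"
  define p where "p = nat \<lfloor>v / c\<rfloor>"
  have "0 \<le> v / c" using v c by simp
  then have "real p \<le> v / c" "v / c < real p + 1"
    unfolding p_def by linarith+
  then have p: "real p * c \<le> v" "v - real p * c \<le> c"
    using c by (simp_all add: field_simps)
  have c2N: "c\<^sup>2 * (real N * real N) = 1"
    using Nc by (simp add: power2_eq_square algebra_simps)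
  have "\<bar>?E v - ?E (real p * c)\<bar> \<le> 2 * (real N * real N * \<omega>)"
    using double_grid_sum_modulus[where f = f and y = v and y' = "real p * c", OF Nc c \<omega>]
      double_grid_sum_modulus[where f = f and y = "- v" and y' = "- (real p * c)", OF Nc c \<omega>] v r p c
    by (simp add: central_diff_def)
  then have "c\<^sup>2 * \<bar>?E v - ?E (real p * c)\<bar> \<le> c\<^sup>2 * (2 * (real N * real N * \<omega>))"
    by (rule mult_left_mono) simp
  also have "\<dots> = 2 * \<omega>"
    using c2N by (simp add: algebra_simps)
  finally have rounding: "\<bar>c\<^sup>2 * ?E v - c\<^sup>2 * ?E (real p * c)\<bar> \<le> 2 * \<omega>"
    by (simp add: abs_mult flip: right_diff_distrib)
  have "c\<^sup>2 * ?E (real p * c) - (real p * c)\<^sup>2 * D = c\<^sup>2 * (?E (real p * c) - real p * real p * D)"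
    by (simp add: power2_eq_square algebra_simps)
  then have "\<bar>c\<^sup>2 * ?E (real p * c) - (real p * c)\<^sup>2 * D\<bar> = c\<^sup>2 * \<bar>?E (real p * c) - real p * real p * D\<bar>"
    by (simp add: abs_mult)
  also have "\<dots> \<le> c\<^sup>2 * (real p * real p * \<kappa>)"
    using central_diff_double_grid_sum_grid_point[OF Nc c _ \<kappa>] p v
    by (intro mult_left_mono) auto
  also have "\<dots> = (real p * c)\<^sup>2 * \<kappa>"
    by (simp add: power2_eq_square algebra_simps)
  also have "\<dots> \<le> r\<^sup>2 * \<kappa>"
    using \<kappa>[of 0] p v c r by (intro mult_right_mono power_mono) auto
  finally have grid: "\<bar>c\<^sup>2 * ?E (real p * c) - (real p * c)\<^sup>2 * D\<bar> \<le> r\<^sup>2 * \<kappa>" .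
  have square: "\<bar>(real p * c)\<^sup>2 * D - v\<^sup>2 * D\<bar> \<le> 2 * r * c * \<bar>D\<bar>"
    using p v c by (intro square_diff_bound) auto
  show ?thesis using rounding grid square by (simp add: abs_le_iff)
qed

lemma central_diff_double_grid_sum_approx_square:
  fixes f :: "real \<Rightarrow> real"
  assumes cont: "continuous_on UNIV f" and \<eta>: "\<eta> > 0"
  shows "\<exists>r N c. 0 < r \<and> r \<le> 1 \<and> real N * c = 1 \<and> 0 < c \<and>
    (\<forall>v. \<bar>v\<bar> \<le> r \<longrightarrow> \<bar>c\<^sup>2 * central_diff (double_grid_sum f N c) v - v\<^sup>2 * second_diff f 0\<bar> \<le> \<eta> * r\<^sup>2)"
proof -
  define D where "D = second_diff f 0"
  have "isCont (second_diff f) 0"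
    unfolding second_diff_def[abs_def] using cont
    by (intro continuous_intros) (auto simp: continuous_on_eq_continuous_at intro: isCont_o2)
  then obtain r0 where r0: "r0 > 0" "\<And>w. \<bar>w\<bar> < r0 \<Longrightarrow> \<bar>second_diff f w - D\<bar> < \<eta> / 3"
    using \<eta> unfolding continuous_at_eps_delta D_def dist_real_def by (metis diff_zero divide_pos_pos zero_less_numeral)
  define r where "r = min (r0 / 2) 1"
  have r: "0 < r" "r \<le> 1" using r0 by (auto simp: r_def)
  have \<kappa>: "\<bar>second_diff f w - D\<bar> \<le> \<eta> / 3" if "\<bar>w\<bar> \<le> r" for w
    using r0(2)[of w] that r0(1) by (simp add: r_def)
  have "uniformly_continuous_on {-2..4} f"
    by (intro compact_uniformly_continuous continuous_on_subset[OF cont]) auto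
  then obtain du where du: "du > 0"
      "\<And>z z'. z \<in> {-2..4} \<Longrightarrow> z' \<in> {-2..4} \<Longrightarrow> dist z' z < du \<Longrightarrow> dist (f z') (f z) < \<eta> * r\<^sup>2 / 6"
    using \<eta> r unfolding uniformly_continuous_on_def by (metis divide_pos_pos zero_less_numeral zero_less_power mult_pos_pos)
  have "min du (\<eta> * r / (6 * (\<bar>D\<bar> + 1))) > 0"
    using du \<eta> r by simp
  then obtain N c where c: "real N * c = 1" "0 < c" and c_du: "c < du"
    and c_eta: "c < \<eta> * r / (6 * (\<bar>D\<bar> + 1))"
    using exists_grid_step by (metis min_less_iff_conj)
  have "2 * r * c * \<bar>D\<bar> \<le> 2 * r * c * (\<bar>D\<bar> + 1)"
    using r c by simp
  also have "\<dots> \<le> 2 * r * (\<eta> * r / (6 * (\<bar>D\<bar> + 1))) * (\<bar>D\<bar> + 1)"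
    using r c_eta by (intro mult_right_mono mult_left_mono) auto
  also have "\<dots> = \<eta> * r\<^sup>2 / 3"
    by (simp add: power2_eq_square field_simps)
  finally have c_small: "2 * r * c * \<bar>D\<bar> \<le> \<eta> * r\<^sup>2 / 3" .
  have \<omega>: "\<bar>f z - f z'\<bar> \<le> \<eta> * r\<^sup>2 / 6" if "z \<in> {-2..4}" "z' \<in> {-2..4}" "\<bar>z - z'\<bar> \<le> c" for z z'
    using du(2)[OF that(2,1)] that(3) c_du by (simp add: dist_real_def abs_minus_commute)
  have "\<bar>c\<^sup>2 * central_diff (double_grid_sum f N c) v - v\<^sup>2 * D\<bar> \<le> \<eta> * r\<^sup>2" if v: "\<bar>v\<bar> \<le> r" for v
  proof -
    have "\<bar>c\<^sup>2 * central_diff (double_grid_sum f N c) \<bar>v\<bar> - \<bar>v\<bar>\<^sup>2 * D\<bar> \<le>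
        2 * (\<eta> * r\<^sup>2 / 6) + r\<^sup>2 * (\<eta> / 3) + 2 * r * c * \<bar>D\<bar>"
      using v by (intro central_diff_double_grid_sum_approx[OF c r \<omega> \<kappa>]) auto
    moreover have "central_diff (double_grid_sum f N c) \<bar>v\<bar> = central_diff (double_grid_sum f N c) v"
      by (cases "v \<ge> 0") auto
    ultimately show ?thesis using c_small by simp
  qed
  then show ?thesis using r c unfolding D_def by blast
qed

section \<open>Squares as finite sums of activations\<close>

locale activation =
  fixes \<sigma> :: "real \<Rightarrow> real" and t0 D :: real
  assumes continuous: "continuous_on UNIV \<sigma>"
    and nonaffine: "\<not> (\<exists>a b. \<forall>t. \<sigma> t = a * t + b)"
    and has_deriv: "(\<sigma> has_real_derivative D) (at t0)"
    and deriv_nonzero: "D \<noteq> 0"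
begin

lemma rescaled_near_identity:
  assumes "\<eta> > 0"
  shows "\<exists>\<delta>>0. \<forall>x. \<bar>x\<bar> \<le> R \<longrightarrow> \<bar>(\<sigma> (t0 + \<delta> * x) - \<sigma> t0) / (\<delta> * D) - x\<bar> \<le> \<eta>"
proof -
  define e where "e = \<eta> * \<bar>D\<bar> / (\<bar>R\<bar> + 1)"
  have e: "e > 0" using assms deriv_nonzero by (simp add: e_def)
  obtain s where s: "s > 0" "\<And>h. h \<noteq> 0 \<Longrightarrow> \<bar>h\<bar> < s \<Longrightarrow> \<bar>(\<sigma> (t0 + h) - \<sigma> t0) / h - D\<bar> < e"
    using LIM_D[OF DERIV_D[OF has_deriv] e] by auto
  define \<delta> where "\<delta> = s / (\<bar>R\<bar> + 1)"
  have \<delta>: "\<delta> > 0" using s by (simp add: \<delta>_def)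
  have "\<bar>(\<sigma> (t0 + \<delta> * x) - \<sigma> t0) / (\<delta> * D) - x\<bar> \<le> \<eta>" if x: "\<bar>x\<bar> \<le> R" for x
  proof (cases "x = 0")
    case True
    then show ?thesis using assms by simp
  next
    case False
    let ?Q = "(\<sigma> (t0 + \<delta> * x) - \<sigma> t0) / (\<delta> * x)"
    have "\<bar>\<delta> * x\<bar> \<le> \<delta> * \<bar>R\<bar>"
      using x \<delta> by (simp add: abs_mult)
    also have "\<dots> < s"
      using s by (simp add: \<delta>_def field_simps)
    finally have quotient: "\<bar>?Q - D\<bar> < e"
      using s(2) False \<delta> by simp
    have "(\<sigma> (t0 + \<delta> * x) - \<sigma> t0) / (\<delta> * D) - x = x / D * (?Q - D)"
      using False \<delta> deriv_nonzero by (simp add: field_simps)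
    also have "\<bar>\<dots>\<bar> = \<bar>x\<bar> / \<bar>D\<bar> * \<bar>?Q - D\<bar>"
      by (simp add: abs_mult)
    also have "\<dots> \<le> \<bar>R\<bar> / \<bar>D\<bar> * e"
      using quotient x e by (intro mult_mono divide_right_mono) auto
    also have "\<dots> \<le> \<eta>"
      using assms deriv_nonzero by (simp add: e_def field_simps)
    finally show ?thesis .
  qed
  then show ?thesis
    using \<delta> by blast
qed

lemma second_diff_nonzero: "\<exists>u h. second_diff (\<lambda>z. \<sigma> (u + h * z)) 0 \<noteq> 0"
proof -
  have "\<exists>x h. \<sigma> (x + 2 * h) - 2 * \<sigma> (x + h) + \<sigma> x \<noteq> 0"
    using affine_if_second_diff_zero[OF continuous] nonaffine by blast
  then show ?thesis by (auto simp: second_diff_def mult.commute)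
qed

definition sigma_sum :: "(real \<times> real \<times> real) list \<Rightarrow> real \<Rightarrow> real" where
  "sigma_sum L x = (\<Sum>(l, a, b)\<leftarrow>L. l * \<sigma> (a * x + b))"

lemma sigma_sum_Nil [simp]: "sigma_sum [] x = 0"
  and sigma_sum_Cons [simp]: "sigma_sum ((l, a, b) # L) x = l * \<sigma> (a * x + b) + sigma_sum L x"
  by (simp_all add: sigma_sum_def)

lemma sigma_sum_append: "sigma_sum (L1 @ L2) x = sigma_sum L1 x + sigma_sum L2 x"
  by (simp add: sigma_sum_def)

lemma sigma_sum_concat_map: "sigma_sum (concat (map F [0..<N])) x = (\<Sum>j<N. sigma_sum (F j) x)"
  by (induction N) (simp_all add: sigma_sum_append)

text \<open>With \<open>f z = \<sigma> (u + h z)\<close> and \<open>D = second_diff f 0 \<noteq> 0\<close>, the square \<open>x\<^sup>2\<close> on \<open>[-B, B]\<close> is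
  approximated by \<open>B\<^sup>2 / (r\<^sup>2 D) * c\<^sup>2 * central_diff (double_grid_sum f N c) (r x / B)\<close>, a linear
  combination of \<open>3 N\<^sup>2\<close> translates and dilates of \<open>\<sigma>\<close>.\<close>

lemma square_approx:
  assumes B: "B > 0" and \<eta>: "\<eta> > 0"
  shows "\<exists>L. \<forall>x. \<bar>x\<bar> \<le> B \<longrightarrow> \<bar>sigma_sum L x - x\<^sup>2\<bar> \<le> \<eta>"
proof -
  obtain u h where D: "second_diff (\<lambda>z. \<sigma> (u + h * z)) 0 \<noteq> 0"
    using second_diff_nonzero by blast
  define f where "f z = \<sigma> (u + h * z)" for z
  define D where "D = second_diff f 0"
  have "continuous_on UNIV f"
    unfolding f_def by (intro continuous_on_compose2[OF continuous] continuous_intros) auto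
  moreover have "\<eta> * \<bar>D\<bar> / B\<^sup>2 > 0"
    using D B \<eta> by (simp add: D_def f_def[abs_def])
  ultimately obtain r N c where r: "0 < r" "r \<le> 1" and c: "real N * c = 1" "0 < c"
    and approx: "\<And>v. \<bar>v\<bar> \<le> r \<Longrightarrow> \<bar>c\<^sup>2 * central_diff (double_grid_sum f N c) v - v\<^sup>2 * D\<bar> \<le> \<eta> * \<bar>D\<bar> / B\<^sup>2 * r\<^sup>2"
    unfolding D_def by (metis central_diff_double_grid_sum_approx_square)
  define C where "C = B\<^sup>2 * c\<^sup>2 / (r\<^sup>2 * D)"
  define L where "L = concat (map (\<lambda>j. concat (map (\<lambda>k.
        [(C, h * r / B, u + h * (real (j + k) * c)), (C, - (h * r / B), u + h * (real (j + k) * c)),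
         (- 2 * C, 0, u + h * (real (j + k) * c))]) [0..<N])) [0..<N])"
  have L: "sigma_sum L x = C * central_diff (double_grid_sum f N c) (r * x / B)" for x
  proof -
    have "sigma_sum L x = (\<Sum>j<N. \<Sum>k<N. C * (f (r * x / B + real (j + k) * c)
        + f (- (r * x / B) + real (j + k) * c) - 2 * f (0 + real (j + k) * c)))"
      by (simp add: L_def sigma_sum_concat_map f_def algebra_simps)
    then show ?thesis
      by (simp add: central_diff_def double_grid_sum_def sum_distrib_left sum.distrib sum_subtractf
          right_diff_distrib distrib_left)
  qed
  have "\<bar>sigma_sum L x - x\<^sup>2\<bar> \<le> \<eta>" if x: "\<bar>x\<bar> \<le> B" for x
  proof -
    have v: "\<bar>r * x / B\<bar> \<le> r"
      using x r B by (simp add: abs_mult field_simps mult_left_le)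
    have "sigma_sum L x - x\<^sup>2 = B\<^sup>2 / (r\<^sup>2 * D) *
        (c\<^sup>2 * central_diff (double_grid_sum f N c) (r * x / B) - (r * x / B)\<^sup>2 * D)"
      using B r D by (simp add: L C_def D_def f_def[abs_def] field_simps power2_eq_square)
    also have "\<bar>\<dots>\<bar> = B\<^sup>2 / (r\<^sup>2 * \<bar>D\<bar>) *
        \<bar>c\<^sup>2 * central_diff (double_grid_sum f N c) (r * x / B) - (r * x / B)\<^sup>2 * D\<bar>"
      by (simp add: abs_mult)
    also have "\<dots> \<le> B\<^sup>2 / (r\<^sup>2 * \<bar>D\<bar>) * (\<eta> * \<bar>D\<bar> / B\<^sup>2 * r\<^sup>2)"
      by (intro mult_left_mono approx[OF v]) simp
    also have "\<dots> = \<eta>"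
      using B r D by (simp add: D_def f_def[abs_def] field_simps)
    finally show ?thesis .
  qed
  then show ?thesis by blast
qed

end

definition cube :: "nat \<Rightarrow> real \<Rightarrow> (nat \<Rightarrow> real) set" where
  "cube k R = {v. (\<forall>i<k. \<bar>v i\<bar> \<le> R) \<and> (\<forall>i\<ge>k. v i = 0)}"

definition cube_ucont :: "nat \<Rightarrow> ((nat \<Rightarrow> real) \<Rightarrow> real) \<Rightarrow> bool" where
  "cube_ucont k \<phi> \<longleftrightarrow> (\<forall>R. \<exists>C. \<forall>v\<in>cube k R. \<bar>\<phi> v\<bar> \<le> C) \<and>
     (\<forall>R \<epsilon>. \<epsilon> > 0 \<longrightarrow> (\<exists>\<delta>>0. \<forall>v\<in>cube k R. \<forall>w\<in>cube k R.
        (\<forall>i<k. \<bar>v i - w i\<bar> \<le> \<delta>) \<longrightarrow> \<bar>\<phi> v - \<phi> w\<bar> \<le> \<epsilon>))"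

definition cube_ucont_map :: "nat \<Rightarrow> ((nat \<Rightarrow> real) \<Rightarrow> (nat \<Rightarrow> real)) \<Rightarrow> bool" where
  "cube_ucont_map k \<Psi> \<longleftrightarrow> (\<forall>R. \<exists>R'. \<forall>v\<in>cube k R. \<Psi> v \<in> cube k R') \<and>
     (\<forall>R \<epsilon>. \<epsilon> > 0 \<longrightarrow> (\<exists>\<delta>>0. \<forall>v\<in>cube k R. \<forall>w\<in>cube k R.
        (\<forall>i<k. \<bar>v i - w i\<bar> \<le> \<delta>) \<longrightarrow> (\<forall>i<k. \<bar>\<Psi> v i - \<Psi> w i\<bar> \<le> \<epsilon>)))"

definition affine_form :: "nat \<Rightarrow> (nat \<Rightarrow> real) \<Rightarrow> real \<Rightarrow> (nat \<Rightarrow> real) \<Rightarrow> real" where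
  "affine_form k a c v = (\<Sum>j<k. a j * v j) + c"

lemma cube_mono: "v \<in> cube k R \<Longrightarrow> R \<le> R' \<Longrightarrow> v \<in> cube k R'"
  by (auto simp: cube_def)

lemma cube_ucontI:
  assumes "\<And>R. \<exists>C. \<forall>v\<in>cube k R. \<bar>\<phi> v\<bar> \<le> C"
    and "\<And>R \<epsilon>. \<epsilon> > 0 \<Longrightarrow> \<exists>\<delta>>0. \<forall>v\<in>cube k R. \<forall>w\<in>cube k R.
        (\<forall>i<k. \<bar>v i - w i\<bar> \<le> \<delta>) \<longrightarrow> \<bar>\<phi> v - \<phi> w\<bar> \<le> \<epsilon>"
  shows "cube_ucont k \<phi>"
  unfolding cube_ucont_def using assms by blast

lemma cube_ucont_bounded: "cube_ucont k \<phi> \<Longrightarrow> \<exists>C. \<forall>v\<in>cube k R. \<bar>\<phi> v\<bar> \<le> C"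
  unfolding cube_ucont_def by blast

lemma cube_ucont_ucont:
  "cube_ucont k \<phi> \<Longrightarrow> \<epsilon> > 0 \<Longrightarrow> \<exists>\<delta>>0. \<forall>v\<in>cube k R. \<forall>w\<in>cube k R.
     (\<forall>i<k. \<bar>v i - w i\<bar> \<le> \<delta>) \<longrightarrow> \<bar>\<phi> v - \<phi> w\<bar> \<le> \<epsilon>"
  unfolding cube_ucont_def by blast

lemma cube_ucont_mapI:
  assumes "\<And>R. \<exists>R'. \<forall>v\<in>cube k R. \<Psi> v \<in> cube k R'"
    and "\<And>R \<epsilon>. \<epsilon> > 0 \<Longrightarrow> \<exists>\<delta>>0. \<forall>v\<in>cube k R. \<forall>w\<in>cube k R.
        (\<forall>i<k. \<bar>v i - w i\<bar> \<le> \<delta>) \<longrightarrow> (\<forall>i<k. \<bar>\<Psi> v i - \<Psi> w i\<bar> \<le> \<epsilon>)"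
  shows "cube_ucont_map k \<Psi>"
  unfolding cube_ucont_map_def using assms by blast

lemma cube_ucont_map_bounded: "cube_ucont_map k \<Psi> \<Longrightarrow> \<exists>R'. \<forall>v\<in>cube k R. \<Psi> v \<in> cube k R'"
  unfolding cube_ucont_map_def by blast

lemma cube_ucont_map_ucont:
  "cube_ucont_map k \<Psi> \<Longrightarrow> \<epsilon> > 0 \<Longrightarrow> \<exists>\<delta>>0. \<forall>v\<in>cube k R. \<forall>w\<in>cube k R.
     (\<forall>i<k. \<bar>v i - w i\<bar> \<le> \<delta>) \<longrightarrow> (\<forall>i<k. \<bar>\<Psi> v i - \<Psi> w i\<bar> \<le> \<epsilon>)"
  unfolding cube_ucont_map_def by blast

lemma cube_ucont_map_comp:
  assumes "cube_ucont_map k \<Psi>1" "cube_ucont_map k \<Psi>2"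
  shows "cube_ucont_map k (\<lambda>v. \<Psi>2 (\<Psi>1 v))"
proof (rule cube_ucont_mapI)
  fix R
  obtain R' where "\<forall>v\<in>cube k R. \<Psi>1 v \<in> cube k R'"
    using cube_ucont_map_bounded[OF assms(1)] by blast
  moreover obtain R'' where "\<forall>v\<in>cube k R'. \<Psi>2 v \<in> cube k R''"
    using cube_ucont_map_bounded[OF assms(2)] by blast
  ultimately show "\<exists>R''. \<forall>v\<in>cube k R. \<Psi>2 (\<Psi>1 v) \<in> cube k R''" by blast
next
  fix R \<epsilon> :: real assume "\<epsilon> > 0"
  obtain R' where R': "\<forall>v\<in>cube k R. \<Psi>1 v \<in> cube k R'"
    using cube_ucont_map_bounded[OF assms(1)] by blast
  obtain \<delta>2 where \<delta>2: "\<delta>2 > 0" "\<forall>v\<in>cube k R'. \<forall>w\<in>cube k R'.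
      (\<forall>i<k. \<bar>v i - w i\<bar> \<le> \<delta>2) \<longrightarrow> (\<forall>i<k. \<bar>\<Psi>2 v i - \<Psi>2 w i\<bar> \<le> \<epsilon>)"
    using cube_ucont_map_ucont[OF assms(2) \<open>\<epsilon> > 0\<close>] by blast
  obtain \<delta>1 where \<delta>1: "\<delta>1 > 0" "\<forall>v\<in>cube k R. \<forall>w\<in>cube k R.
      (\<forall>i<k. \<bar>v i - w i\<bar> \<le> \<delta>1) \<longrightarrow> (\<forall>i<k. \<bar>\<Psi>1 v i - \<Psi>1 w i\<bar> \<le> \<delta>2)"
    using cube_ucont_map_ucont[OF assms(1) \<delta>2(1)] by blast
  show "\<exists>\<delta>>0. \<forall>v\<in>cube k R. \<forall>w\<in>cube k R.
      (\<forall>i<k. \<bar>v i - w i\<bar> \<le> \<delta>) \<longrightarrow> (\<forall>i<k. \<bar>\<Psi>2 (\<Psi>1 v) i - \<Psi>2 (\<Psi>1 w) i\<bar> \<le> \<epsilon>)"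
    using \<delta>1 \<delta>2(2) R' by blast
qed

lemma cube_ucont_map_upd:
  assumes "s < k" and "cube_ucont k \<phi>"
  shows "cube_ucont_map k (\<lambda>v. v(s := \<phi> v))"
proof (rule cube_ucont_mapI)
  fix R
  obtain C where "\<forall>v\<in>cube k R. \<bar>\<phi> v\<bar> \<le> C"
    using cube_ucont_bounded[OF assms(2)] by blast
  then have "\<forall>v\<in>cube k R. v(s := \<phi> v) \<in> cube k (max R C)"
    using assms(1) by (auto simp: cube_def le_max_iff_disj)
  then show "\<exists>R'. \<forall>v\<in>cube k R. v(s := \<phi> v) \<in> cube k R'" by blast
next
  fix R \<epsilon> :: real assume "\<epsilon> > 0"
  then obtain \<delta> where \<delta>: "\<delta> > 0" "\<forall>v\<in>cube k R. \<forall>w\<in>cube k R.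
      (\<forall>i<k. \<bar>v i - w i\<bar> \<le> \<delta>) \<longrightarrow> \<bar>\<phi> v - \<phi> w\<bar> \<le> \<epsilon>"
    using cube_ucont_ucont[OF assms(2)] by blast
  have "\<forall>v\<in>cube k R. \<forall>w\<in>cube k R. (\<forall>i<k. \<bar>v i - w i\<bar> \<le> min \<delta> \<epsilon>) \<longrightarrow>
      (\<forall>i<k. \<bar>(v(s := \<phi> v)) i - (w(s := \<phi> w)) i\<bar> \<le> \<epsilon>)"
    using \<delta>(2) by auto
  then show "\<exists>\<delta>>0. \<forall>v\<in>cube k R. \<forall>w\<in>cube k R. (\<forall>i<k. \<bar>v i - w i\<bar> \<le> \<delta>) \<longrightarrow>
      (\<forall>i<k. \<bar>(v(s := \<phi> v)) i - (w(s := \<phi> w)) i\<bar> \<le> \<epsilon>)"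
    using \<delta>(1) \<open>\<epsilon> > 0\<close> by (metis min_less_iff_conj)
qed

lemma cube_ucont_const: "cube_ucont k (\<lambda>v. c)"
  by (rule cube_ucontI) auto

lemma cube_ucont_coord: "cube_ucont k (\<lambda>v. v j)"
proof (rule cube_ucontI)
  fix R show "\<exists>C. \<forall>v\<in>cube k R. \<bar>v j\<bar> \<le> C"
    by (cases "j < k") (auto simp: cube_def intro!: exI[of _ "max R 0"])
next
  fix R \<epsilon> :: real assume "\<epsilon> > 0"
  then show "\<exists>\<delta>>0. \<forall>v\<in>cube k R. \<forall>w\<in>cube k R. (\<forall>i<k. \<bar>v i - w i\<bar> \<le> \<delta>) \<longrightarrow> \<bar>v j - w j\<bar> \<le> \<epsilon>"
    by (cases "j < k") (auto simp: cube_def intro!: exI[of _ \<epsilon>])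
qed

lemma cube_ucont_add:
  assumes "cube_ucont k \<phi>" "cube_ucont k \<psi>"
  shows "cube_ucont k (\<lambda>v. \<phi> v + \<psi> v)"
proof (rule cube_ucontI)
  fix R
  obtain C1 C2 where "\<forall>v\<in>cube k R. \<bar>\<phi> v\<bar> \<le> C1" "\<forall>v\<in>cube k R. \<bar>\<psi> v\<bar> \<le> C2"
    using cube_ucont_bounded[OF assms(1)] cube_ucont_bounded[OF assms(2)] by metis
  then have "\<forall>v\<in>cube k R. \<bar>\<phi> v + \<psi> v\<bar> \<le> C1 + C2"
    by (smt (verit, best))
  then show "\<exists>C. \<forall>v\<in>cube k R. \<bar>\<phi> v + \<psi> v\<bar> \<le> C" by blast
next
  fix R \<epsilon> :: real assume "\<epsilon> > 0"
  then have "\<epsilon> / 2 > 0" by simp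
  then obtain \<delta>1 \<delta>2 where \<delta>: "\<delta>1 > 0" "\<delta>2 > 0"
    "\<forall>v\<in>cube k R. \<forall>w\<in>cube k R. (\<forall>i<k. \<bar>v i - w i\<bar> \<le> \<delta>1) \<longrightarrow> \<bar>\<phi> v - \<phi> w\<bar> \<le> \<epsilon> / 2"
    "\<forall>v\<in>cube k R. \<forall>w\<in>cube k R. (\<forall>i<k. \<bar>v i - w i\<bar> \<le> \<delta>2) \<longrightarrow> \<bar>\<psi> v - \<psi> w\<bar> \<le> \<epsilon> / 2"
    using cube_ucont_ucont[OF assms(1)] cube_ucont_ucont[OF assms(2)] by metis
  show "\<exists>\<delta>>0. \<forall>v\<in>cube k R. \<forall>w\<in>cube k R. (\<forall>i<k. \<bar>v i - w i\<bar> \<le> \<delta>) \<longrightarrow>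
      \<bar>\<phi> v + \<psi> v - (\<phi> w + \<psi> w)\<bar> \<le> \<epsilon>"
  proof (intro exI[of _ "min \<delta>1 \<delta>2"] conjI ballI impI)
    fix v w assume "v \<in> cube k R" "w \<in> cube k R" "\<forall>i<k. \<bar>v i - w i\<bar> \<le> min \<delta>1 \<delta>2"
    then have "\<bar>\<phi> v - \<phi> w\<bar> \<le> \<epsilon> / 2" "\<bar>\<psi> v - \<psi> w\<bar> \<le> \<epsilon> / 2"
      using \<delta>(3,4) by auto
    then show "\<bar>\<phi> v + \<psi> v - (\<phi> w + \<psi> w)\<bar> \<le> \<epsilon>" by linarith
  qed (use \<delta> in simp)
qed

lemma cube_ucont_mult:
  assumes "cube_ucont k \<phi>" "cube_ucont k \<psi>"
  shows "cube_ucont k (\<lambda>v. \<phi> v * \<psi> v)"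
proof (rule cube_ucontI)
  fix R
  obtain C1 C2 where "\<forall>v\<in>cube k R. \<bar>\<phi> v\<bar> \<le> C1" "\<forall>v\<in>cube k R. \<bar>\<psi> v\<bar> \<le> C2"
    using cube_ucont_bounded[OF assms(1)] cube_ucont_bounded[OF assms(2)] by metis
  then have "\<forall>v\<in>cube k R. \<bar>\<phi> v * \<psi> v\<bar> \<le> C1 * C2"
    by (auto simp: abs_mult intro!: mult_mono)
  then show "\<exists>C. \<forall>v\<in>cube k R. \<bar>\<phi> v * \<psi> v\<bar> \<le> C" by blast
next
  fix R \<epsilon> :: real assume "\<epsilon> > 0"
  obtain C1 C2 where C: "\<forall>v\<in>cube k R. \<bar>\<phi> v\<bar> \<le> C1" "\<forall>v\<in>cube k R. \<bar>\<psi> v\<bar> \<le> C2"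
    using cube_ucont_bounded[OF assms(1)] cube_ucont_bounded[OF assms(2)] by metis
  define M where "M = max C1 0 + max C2 0 + 1"
  have M: "M > 0" by (simp add: M_def)
  then have "\<epsilon> / (2 * M) > 0" using \<open>\<epsilon> > 0\<close> by simp
  then obtain \<delta>1 \<delta>2 where \<delta>: "\<delta>1 > 0" "\<delta>2 > 0"
    "\<forall>v\<in>cube k R. \<forall>w\<in>cube k R. (\<forall>i<k. \<bar>v i - w i\<bar> \<le> \<delta>1) \<longrightarrow> \<bar>\<phi> v - \<phi> w\<bar> \<le> \<epsilon> / (2 * M)"
    "\<forall>v\<in>cube k R. \<forall>w\<in>cube k R. (\<forall>i<k. \<bar>v i - w i\<bar> \<le> \<delta>2) \<longrightarrow> \<bar>\<psi> v - \<psi> w\<bar> \<le> \<epsilon> / (2 * M)"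
    using cube_ucont_ucont[OF assms(1)] cube_ucont_ucont[OF assms(2)] by metis
  show "\<exists>\<delta>>0. \<forall>v\<in>cube k R. \<forall>w\<in>cube k R. (\<forall>i<k. \<bar>v i - w i\<bar> \<le> \<delta>) \<longrightarrow>
      \<bar>\<phi> v * \<psi> v - \<phi> w * \<psi> w\<bar> \<le> \<epsilon>"
  proof (intro exI[of _ "min \<delta>1 \<delta>2"] conjI ballI impI)
    fix v w assume vw: "v \<in> cube k R" "w \<in> cube k R" "\<forall>i<k. \<bar>v i - w i\<bar> \<le> min \<delta>1 \<delta>2"
    have "\<phi> v * \<psi> v - \<phi> w * \<psi> w = \<phi> v * (\<psi> v - \<psi> w) + \<psi> w * (\<phi> v - \<phi> w)"
      by (simp add: algebra_simps)
    then have "\<bar>\<phi> v * \<psi> v - \<phi> w * \<psi> w\<bar> \<le> \<bar>\<phi> v\<bar> * \<bar>\<psi> v - \<psi> w\<bar> + \<bar>\<psi> w\<bar> * \<bar>\<phi> v - \<phi> w\<bar>"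
      by (metis abs_mult abs_triangle_ineq)
    also have "\<dots> \<le> M * (\<epsilon> / (2 * M)) + M * (\<epsilon> / (2 * M))"
      using vw C \<delta>(3,4) by (intro add_mono mult_mono) (auto simp: M_def)
    also have "\<dots> = \<epsilon>" using M by (simp add: field_simps)
    finally show "\<bar>\<phi> v * \<psi> v - \<phi> w * \<psi> w\<bar> \<le> \<epsilon>" .
  qed (use \<delta> in simp)
qed

lemma cube_ucont_sum:
  "finite A \<Longrightarrow> (\<And>j. j \<in> A \<Longrightarrow> cube_ucont k (f j)) \<Longrightarrow> cube_ucont k (\<lambda>v. \<Sum>j\<in>A. f j v)"
  by (induction A rule: finite_induct) (simp_all add: cube_ucont_const cube_ucont_add)

lemma cube_ucont_affine_form: "cube_ucont k (affine_form k a c)"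
  unfolding affine_form_def[abs_def]
  by (intro cube_ucont_add cube_ucont_const cube_ucont_sum cube_ucont_mult cube_ucont_coord) auto

lemma (in activation) cube_ucont_sigma:
  assumes "cube_ucont k \<phi>"
  shows "cube_ucont k (\<lambda>v. \<sigma> (\<phi> v))"
proof (rule cube_ucontI)
  fix R
  obtain C where C: "\<forall>v\<in>cube k R. \<bar>\<phi> v\<bar> \<le> C" using cube_ucont_bounded[OF assms] by blast
  have "compact (\<sigma> ` {-C..C})"
    by (intro compact_continuous_image continuous_on_subset[OF continuous]) auto
  then obtain M where M: "\<forall>x\<in>{-C..C}. \<bar>\<sigma> x\<bar> \<le> M"
    by (meson bounded_real compact_imp_bounded image_eqI)
  have "\<phi> v \<in> {-C..C}" if "v \<in> cube k R" for v
    using C that by (auto simp: abs_le_iff)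
  then have "\<forall>v\<in>cube k R. \<bar>\<sigma> (\<phi> v)\<bar> \<le> M"
    using M by blast
  then show "\<exists>M. \<forall>v\<in>cube k R. \<bar>\<sigma> (\<phi> v)\<bar> \<le> M" by blast
next
  fix R \<epsilon> :: real assume "\<epsilon> > 0"
  obtain C where C: "\<forall>v\<in>cube k R. \<bar>\<phi> v\<bar> \<le> C" using cube_ucont_bounded[OF assms] by blast
  have "uniformly_continuous_on {-C..C} \<sigma>"
    by (intro compact_uniformly_continuous continuous_on_subset[OF continuous]) auto
  then obtain d where d: "d > 0" "\<forall>x\<in>{-C..C}. \<forall>x'\<in>{-C..C}. \<bar>x' - x\<bar> < d \<longrightarrow> \<bar>\<sigma> x' - \<sigma> x\<bar> < \<epsilon>"
    using \<open>\<epsilon> > 0\<close> unfolding uniformly_continuous_on_def dist_real_def by blast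
  obtain \<delta> where \<delta>: "\<delta> > 0" "\<forall>v\<in>cube k R. \<forall>w\<in>cube k R.
      (\<forall>i<k. \<bar>v i - w i\<bar> \<le> \<delta>) \<longrightarrow> \<bar>\<phi> v - \<phi> w\<bar> \<le> d / 2"
    using cube_ucont_ucont[OF assms, where \<epsilon> = "d / 2" and R = R] d by auto
  have "\<bar>\<sigma> (\<phi> v) - \<sigma> (\<phi> w)\<bar> \<le> \<epsilon>"
    if "v \<in> cube k R" "w \<in> cube k R" "\<forall>i<k. \<bar>v i - w i\<bar> \<le> \<delta>" for v w
  proof -
    have "\<bar>\<phi> v - \<phi> w\<bar> \<le> d / 2" using \<delta>(2) that by blast
    then have "\<bar>\<phi> v - \<phi> w\<bar> < d" using d(1) by linarith
    moreover have "\<phi> v \<in> {-C..C}" "\<phi> w \<in> {-C..C}" using C that by (auto simp: abs_le_iff)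
    ultimately have "\<bar>\<sigma> (\<phi> v) - \<sigma> (\<phi> w)\<bar> < \<epsilon>" using d(2) by blast
    then show ?thesis by simp
  qed
  then show "\<exists>\<delta>>0. \<forall>v\<in>cube k R. \<forall>w\<in>cube k R.
      (\<forall>i<k. \<bar>v i - w i\<bar> \<le> \<delta>) \<longrightarrow> \<bar>\<sigma> (\<phi> v) - \<sigma> (\<phi> w)\<bar> \<le> \<epsilon>"
    using \<delta>(1) by blast
qed

lemma affine_form_upd: "a s = 0 \<Longrightarrow> affine_form k a c (v(s := x)) = affine_form k a c v"
  unfolding affine_form_def by (intro arg_cong2[where f="(+)"] sum.cong) auto

lemma affine_form_scale: "affine_form k (\<lambda>i. \<alpha> * a i) (\<alpha> * c + \<beta>) v = \<alpha> * affine_form k a c v + \<beta>"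
  unfolding affine_form_def by (simp add: sum_distrib_left algebra_simps)

lemma affine_form_coord: "t < k \<Longrightarrow> affine_form k (\<lambda>i. if i = t then x else 0) c v = x * v t + c"
  by (simp add: affine_form_def if_distrib[of "\<lambda>y. y * v _"] sum.delta cong: if_cong)

lemma affine_form_two_coords:
  assumes "t < k" "s < k" "t \<noteq> s"
  shows "affine_form k (\<lambda>i. if i = t then x else if i = s then y else 0) c v = x * v t + y * v s + c"
proof -
  have "(\<Sum>j<k. (if j = t then x else if j = s then y else 0) * v j) =
        (\<Sum>j<k. (if j = t then x else 0) * v j) + (\<Sum>j<k. (if j = s then y else 0) * v j)"
    unfolding sum.distrib[symmetric] by (rule sum.cong) (use assms in auto)
  then show ?thesis
    using assms affine_form_coord[of t k x 0 v] affine_form_coord[of s k y 0 v]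
    by (simp add: affine_form_def)
qed

lemma affine_form_zero [simp]: "affine_form k (\<lambda>i. 0) c v = c"
  by (simp add: affine_form_def)

section \<open>Maps approximable by networks of fixed width\<close>

lemma is_network_one_layer:
  "is_network \<sigma> k k k (\<lambda>v i. if i < k then \<alpha> i * \<sigma> (affine_form k (W i) (b i) v) + \<beta> i else 0)"
proof -
  define Wo where "Wo i j = (if i = j then \<alpha> i else 0)" for i j :: nat
  have "(\<lambda>v i. if i < k then \<alpha> i * \<sigma> (affine_form k (W i) (b i) v) + \<beta> i else 0) =
      (\<lambda>v. affine_map Wo \<beta> k k (hidden_eval \<sigma> k [(W, b, k)] v))"
    by (intro ext) (simp add: affine_map_def affine_form_def Wo_def if_distrib[of "\<lambda>y. y * _"] sum.delta
        cong: if_cong)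
  then show ?thesis
    unfolding is_network_def by (intro exI[of _ "[(W, b, k)]"] exI[of _ Wo] exI[of _ \<beta>]) auto
qed

context activation
begin

definition net_approximable :: "nat \<Rightarrow> ((nat \<Rightarrow> real) \<Rightarrow> (nat \<Rightarrow> real)) \<Rightarrow> bool" where
  "net_approximable k \<Psi> \<longleftrightarrow> (\<forall>R \<eta>. \<eta> > 0 \<longrightarrow> (\<exists>\<Phi>. is_network \<sigma> k k k \<Phi> \<and>
      (\<forall>v\<in>cube k R. \<forall>i<k. \<bar>\<Phi> v i - \<Psi> v i\<bar> \<le> \<eta>)))"

lemma net_approximableD:
  "net_approximable k \<Psi> \<Longrightarrow> \<eta> > 0 \<Longrightarrow>
     \<exists>\<Phi>. is_network \<sigma> k k k \<Phi> \<and> (\<forall>v\<in>cube k R. \<forall>i<k. \<bar>\<Phi> v i - \<Psi> v i\<bar> \<le> \<eta>)"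
  unfolding net_approximable_def by blast

lemma net_approximableI:
  "(\<And>R \<eta>. \<eta> > 0 \<Longrightarrow> \<exists>\<Phi>. is_network \<sigma> k k k \<Phi> \<and> (\<forall>v\<in>cube k R. \<forall>i<k. \<bar>\<Phi> v i - \<Psi> v i\<bar> \<le> \<eta>))
     \<Longrightarrow> net_approximable k \<Psi>"
  unfolding net_approximable_def by blast

text \<open>The first network is made so accurate that its outputs stay in a slightly larger cube and
  within the modulus of uniform continuity of \<open>\<Psi>2\<close> there.\<close>

lemma net_approximable_comp:
  assumes "net_approximable k \<Psi>1" "net_approximable k \<Psi>2"
    and "cube_ucont_map k \<Psi>1" "cube_ucont_map k \<Psi>2"
  shows "net_approximable k (\<lambda>v. \<Psi>2 (\<Psi>1 v))"
proof (rule net_approximableI)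
  fix R \<eta> :: real assume "\<eta> > 0"
  obtain R' where R': "\<forall>v\<in>cube k R. \<Psi>1 v \<in> cube k R'"
    using cube_ucont_map_bounded[OF assms(3)] by blast
  obtain \<delta> where \<delta>: "\<delta> > 0" "\<forall>v\<in>cube k (R' + 1). \<forall>w\<in>cube k (R' + 1).
      (\<forall>i<k. \<bar>v i - w i\<bar> \<le> \<delta>) \<longrightarrow> (\<forall>i<k. \<bar>\<Psi>2 v i - \<Psi>2 w i\<bar> \<le> \<eta> / 2)"
    using cube_ucont_map_ucont[OF assms(4), where \<epsilon> = "\<eta> / 2" and R = "R' + 1"] \<open>\<eta> > 0\<close> by auto
  obtain \<Phi>1 where \<Phi>1: "is_network \<sigma> k k k \<Phi>1" "\<forall>v\<in>cube k R. \<forall>i<k. \<bar>\<Phi>1 v i - \<Psi>1 v i\<bar> \<le> min \<delta> 1"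
    using net_approximableD[OF assms(1), where \<eta> = "min \<delta> 1" and R = R] \<delta>(1) by auto
  obtain \<Phi>2 where \<Phi>2: "is_network \<sigma> k k k \<Phi>2" "\<forall>v\<in>cube k (R' + 1). \<forall>i<k. \<bar>\<Phi>2 v i - \<Psi>2 v i\<bar> \<le> \<eta> / 2"
    using net_approximableD[OF assms(2), where \<eta> = "\<eta> / 2" and R = "R' + 1"] \<open>\<eta> > 0\<close> by auto
  have "\<bar>\<Phi>2 (\<Phi>1 v) i - \<Psi>2 (\<Psi>1 v) i\<bar> \<le> \<eta>" if v: "v \<in> cube k R" and i: "i < k" for v i
  proof -
    have "\<Psi>1 v \<in> cube k (R' + 1)" using R' v cube_mono by force
    moreover have "\<Phi>1 v \<in> cube k (R' + 1)"
    proof -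
      have "\<bar>\<Phi>1 v j\<bar> \<le> R' + 1" if "j < k" for j
      proof -
        have "\<bar>\<Phi>1 v j - \<Psi>1 v j\<bar> \<le> 1" "\<bar>\<Psi>1 v j\<bar> \<le> R'"
          using \<Phi>1(2) R' v that by (auto simp: cube_def)
        then show ?thesis by linarith
      qed
      then show ?thesis using is_network_out_zero[OF \<Phi>1(1)] by (simp add: cube_def)
    qed
    moreover have "\<forall>j<k. \<bar>\<Phi>1 v j - \<Psi>1 v j\<bar> \<le> \<delta>" using \<Phi>1(2) v by simp
    ultimately have "\<bar>\<Psi>2 (\<Phi>1 v) i - \<Psi>2 (\<Psi>1 v) i\<bar> \<le> \<eta> / 2"
      "\<bar>\<Phi>2 (\<Phi>1 v) i - \<Psi>2 (\<Phi>1 v) i\<bar> \<le> \<eta> / 2"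
      using \<delta>(2) \<Phi>2(2) i by blast+
    then show ?thesis by linarith
  qed
  then show "\<exists>\<Phi>. is_network \<sigma> k k k \<Phi> \<and> (\<forall>v\<in>cube k R. \<forall>i<k. \<bar>\<Phi> v i - \<Psi>2 (\<Psi>1 v) i\<bar> \<le> \<eta>)"
    using is_network_comp[OF \<Phi>1(1) \<Phi>2(1)] by blast
qed

lemma net_approximable_limit:
  assumes "\<And>R \<eta>. \<eta> > 0 \<Longrightarrow> \<exists>\<Psi>'. net_approximable k \<Psi>' \<and> (\<forall>v\<in>cube k R. \<forall>i<k. \<bar>\<Psi>' v i - \<Psi> v i\<bar> \<le> \<eta>)"
  shows "net_approximable k \<Psi>"
proof (rule net_approximableI)
  fix R \<eta> :: real assume "\<eta> > 0"
  then obtain \<Psi>' where \<Psi>': "net_approximable k \<Psi>'" "\<forall>v\<in>cube k R. \<forall>i<k. \<bar>\<Psi>' v i - \<Psi> v i\<bar> \<le> \<eta> / 2"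
    using assms[of "\<eta> / 2" R] by auto
  obtain \<Phi> where \<Phi>: "is_network \<sigma> k k k \<Phi>" "\<forall>v\<in>cube k R. \<forall>i<k. \<bar>\<Phi> v i - \<Psi>' v i\<bar> \<le> \<eta> / 2"
    using net_approximableD[OF \<Psi>'(1), where \<eta> = "\<eta> / 2" and R = R] \<open>\<eta> > 0\<close> by auto
  have "\<forall>v\<in>cube k R. \<forall>i<k. \<bar>\<Phi> v i - \<Psi> v i\<bar> \<le> \<eta>"
  proof (intro ballI allI impI)
    fix v i assume "v \<in> cube k R" "i < k"
    then have "\<bar>\<Phi> v i - \<Psi>' v i\<bar> \<le> \<eta> / 2" "\<bar>\<Psi>' v i - \<Psi> v i\<bar> \<le> \<eta> / 2"
      using \<Phi>(2) \<Psi>'(2) by auto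
    then show "\<bar>\<Phi> v i - \<Psi> v i\<bar> \<le> \<eta>" by linarith
  qed
  then show "\<exists>\<Phi>. is_network \<sigma> k k k \<Phi> \<and> (\<forall>v\<in>cube k R. \<forall>i<k. \<bar>\<Phi> v i - \<Psi> v i\<bar> \<le> \<eta>)"
    using \<Phi>(1) by blast
qed

text \<open>A single hidden layer suffices: the updated register is computed exactly (for \<open>\<rho> = \<sigma>\<close>)
  or through the linearization of \<open>\<sigma>\<close> at \<open>t0\<close>, which also carries every other register.\<close>

lemma net_approximable_update:
  assumes s: "s < k" and \<rho>: "\<rho> = \<sigma> \<or> \<rho> = id"
  shows "net_approximable k (\<lambda>v. v(s := \<rho> (affine_form k a c v)))"
proof (rule net_approximableI)
  fix R \<eta> :: real assume "\<eta> > 0"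
  obtain C where C: "\<forall>v\<in>cube k R. \<bar>affine_form k a c v\<bar> \<le> C"
    using cube_ucont_bounded[OF cube_ucont_affine_form] by blast
  obtain \<delta> where \<delta>: "\<delta> > 0" "\<forall>x. \<bar>x\<bar> \<le> max R C \<longrightarrow> \<bar>(\<sigma> (t0 + \<delta> * x) - \<sigma> t0) / (\<delta> * D) - x\<bar> \<le> \<eta>"
    using rescaled_near_identity[OF \<open>\<eta> > 0\<close>] by blast
  define exact where "exact i \<longleftrightarrow> i = s \<and> \<rho> = \<sigma>" for i
  define A where "A i = (if i = s then a else (\<lambda>j. if j = i then 1 else 0))" for i
  define c' where "c' i = (if i = s then c else 0)" for i
  define \<Phi> where "\<Phi> v i = (if i < k then
      (if exact i then 1 else 1 / (\<delta> * D)) *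
        \<sigma> (affine_form k (if exact i then A i else (\<lambda>j. \<delta> * A i j)) (if exact i then c' i else \<delta> * c' i + t0) v)
      + (if exact i then 0 else - \<sigma> t0 / (\<delta> * D)) else 0)" for v i
  have target: "affine_form k (A i) (c' i) v = (if i = s then affine_form k a c v else v i)" if "i < k" for i v
    using that by (simp add: A_def c'_def affine_form_coord)
  have "\<bar>\<Phi> v i - (v(s := \<rho> (affine_form k a c v))) i\<bar> \<le> \<eta>" if v: "v \<in> cube k R" and i: "i < k" for v i
  proof (cases "exact i")
    case True
    then show ?thesis using i \<open>\<eta> > 0\<close> by (simp add: \<Phi>_def exact_def target)
  next
    case False
    let ?y = "affine_form k (A i) (c' i) v"
    have "\<Phi> v i = (\<sigma> (\<delta> * ?y + t0) - \<sigma> t0) / (\<delta> * D)"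
      using False i by (simp add: \<Phi>_def affine_form_scale diff_divide_distrib)
    then have "\<Phi> v i = (\<sigma> (t0 + \<delta> * ?y) - \<sigma> t0) / (\<delta> * D)"
      by (simp add: add.commute)
    moreover have "(v(s := \<rho> (affine_form k a c v))) i = ?y"
      using False \<rho> i by (auto simp: exact_def target)
    moreover have "\<bar>?y\<bar> \<le> max R C"
    proof (cases "i = s")
      case True
      then show ?thesis using C v i by (simp add: target le_max_iff_disj)
    next
      case False
      then show ?thesis using v i by (simp add: target cube_def le_max_iff_disj)
    qed
    ultimately show ?thesis using \<delta>(2) by simp
  qed
  moreover have "is_network \<sigma> k k k \<Phi>"
    unfolding \<Phi>_def by (rule is_network_one_layer)
  ultimately show "\<exists>\<Phi>. is_network \<sigma> k k k \<Phi> \<and>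
      (\<forall>v\<in>cube k R. \<forall>i<k. \<bar>\<Phi> v i - (v(s := \<rho> (affine_form k a c v))) i\<bar> \<le> \<eta>)"
    by blast
qed

end

section \<open>Register programs\<close>

text \<open>\<open>Add_square t s a c l\<close> adds \<open>l * (affine_form k a c v)\<^sup>2\<close> to register \<open>t\<close> and clears the
  scratch register \<open>s\<close>.\<close>

datatype instr =
    Assign nat "nat \<Rightarrow> real" real
  | Activate nat "nat \<Rightarrow> real" real
  | Add_square nat nat "nat \<Rightarrow> real" real real

fun instr_ok :: "nat \<Rightarrow> instr \<Rightarrow> bool" where
  "instr_ok k (Assign s a c) \<longleftrightarrow> s < k"
| "instr_ok k (Activate s a c) \<longleftrightarrow> s < k"
| "instr_ok k (Add_square t s a c l) \<longleftrightarrow> t < k \<and> s < k \<and> t \<noteq> s \<and> a t = 0 \<and> a s = 0"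

definition square_prog :: "nat \<Rightarrow> nat \<Rightarrow> (nat \<Rightarrow> real) \<Rightarrow> real \<Rightarrow> real \<Rightarrow> (real \<times> real \<times> real) list \<Rightarrow> instr list" where
  "square_prog t s a c l L = concat (map (\<lambda>(m, \<alpha>, \<beta>). [Activate s (\<lambda>i. \<alpha> * a i) (\<alpha> * c + \<beta>),
       Assign t (\<lambda>i. if i = t then 1 else if i = s then l * m else 0) 0]) L)"

lemma square_prog_Nil [simp]: "square_prog t s a c l [] = []"
  and square_prog_Cons [simp]: "square_prog t s a c l ((m, \<alpha>, \<beta>) # L) =
    Activate s (\<lambda>i. \<alpha> * a i) (\<alpha> * c + \<beta>) #
    Assign t (\<lambda>i. if i = t then 1 else if i = s then l * m else 0) 0 # square_prog t s a c l L"
  by (simp_all add: square_prog_def)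

context activation
begin

fun exec :: "nat \<Rightarrow> instr \<Rightarrow> (nat \<Rightarrow> real) \<Rightarrow> (nat \<Rightarrow> real)" where
  "exec k (Assign s a c) v = v(s := affine_form k a c v)"
| "exec k (Activate s a c) v = v(s := \<sigma> (affine_form k a c v))"
| "exec k (Add_square t s a c l) v = (v(s := 0))(t := v t + l * (affine_form k a c v)\<^sup>2)"

fun run :: "nat \<Rightarrow> instr list \<Rightarrow> (nat \<Rightarrow> real) \<Rightarrow> (nat \<Rightarrow> real)" where
  "run k [] v = v"
| "run k (i # P) v = run k P (exec k i v)"

lemma exec_Assign_fun: "exec k (Assign s a c) = (\<lambda>v. v(s := affine_form k a c v))"
  and exec_Activate_fun: "exec k (Activate s a c) = (\<lambda>v. v(s := \<sigma> (affine_form k a c v)))"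
  by (simp_all add: fun_eq_iff)

lemma run_append: "run k (P @ Q) v = run k Q (run k P v)"
  by (induction P arbitrary: v) auto

lemma cube_ucont_map_exec:
  assumes "instr_ok k i"
  shows "cube_ucont_map k (exec k i)"
proof (cases i)
  case (Assign s a c)
  then show ?thesis
    using assms unfolding Assign exec_Assign_fun by (simp add: cube_ucont_map_upd cube_ucont_affine_form)
next
  case (Activate s a c)
  then show ?thesis
    using assms unfolding Activate exec_Activate_fun
    by (simp add: cube_ucont_map_upd cube_ucont_sigma cube_ucont_affine_form)
next
  case (Add_square t s a c l)
  then have ok: "t < k" "s < k" "t \<noteq> s" "a t = 0" "a s = 0" using assms by auto
  have "cube_ucont_map k (\<lambda>v. v(s := 0))"
    using ok by (intro cube_ucont_map_upd cube_ucont_const)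
  moreover have "cube_ucont_map k (\<lambda>v. v(t := v t + l * (affine_form k a c v * affine_form k a c v)))"
    using ok by (intro cube_ucont_map_upd cube_ucont_add cube_ucont_coord cube_ucont_mult cube_ucont_const
        cube_ucont_affine_form)
  ultimately have "cube_ucont_map k
      (\<lambda>v. (\<lambda>v. v(t := v t + l * (affine_form k a c v * affine_form k a c v))) (v(s := 0)))"
    by (rule cube_ucont_map_comp)
  moreover have "exec k i = (\<lambda>v. (\<lambda>v. v(t := v t + l * (affine_form k a c v * affine_form k a c v))) (v(s := 0)))"
    using Add_square ok by (auto simp: affine_form_upd power2_eq_square)
  ultimately show ?thesis by simp
qed

lemma run_square_prog:
  assumes ok: "t < k" "s < k" "t \<noteq> s" "a t = 0" "a s = 0"
  shows "\<exists>z. run k (square_prog t s a c l L) v = (v(t := v t + l * sigma_sum L (affine_form k a c v)))(s := z)"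
proof (induction L arbitrary: v)
  case Nil
  show ?case by (intro exI[of _ "v s"]) simp
next
  case (Cons x L)
  obtain m \<alpha> \<beta> where x: "x = (m, \<alpha>, \<beta>)" by (cases x) auto
  define y where "y = affine_form k a c v"
  define v' where "v' = (v(s := \<sigma> (\<alpha> * y + \<beta>)))(t := v t + l * m * \<sigma> (\<alpha> * y + \<beta>))"
  have "run k (square_prog t s a c l (x # L)) v = run k (square_prog t s a c l L) v'"
    using ok by (simp add: x v'_def y_def affine_form_scale affine_form_two_coords)
  moreover have "affine_form k a c v' = y"
    using ok by (simp add: v'_def affine_form_upd y_def)
  moreover obtain z where "run k (square_prog t s a c l L) v' =
      (v'(t := v' t + l * sigma_sum L (affine_form k a c v')))(s := z)"
    using Cons by blast
  ultimately show ?case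
    using ok by (intro exI[of _ z]) (auto simp: v'_def x y_def algebra_simps)
qed

lemma net_approximable_exec_Assign: "s < k \<Longrightarrow> net_approximable k (exec k (Assign s a c))"
  unfolding exec_Assign_fun using net_approximable_update[of s k id] by simp

lemma net_approximable_exec_Activate: "s < k \<Longrightarrow> net_approximable k (exec k (Activate s a c))"
  unfolding exec_Activate_fun by (rule net_approximable_update) simp_all

lemma net_approximable_cube_ucont_map_run:
  assumes "k > 0" and instrs: "\<And>i. i \<in> set P \<Longrightarrow> net_approximable k (exec k i) \<and> cube_ucont_map k (exec k i)"
  shows "net_approximable k (run k P) \<and> cube_ucont_map k (run k P)"
  using instrs
proof (induction P)
  case Nil
  have run_Nil: "run k [] = exec k (Assign 0 (\<lambda>j. if j = 0 then 1 else 0) 0)"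
    using \<open>k > 0\<close> by (simp add: affine_form_coord fun_eq_iff)
  have "instr_ok k (Assign 0 (\<lambda>j. if j = 0 then 1 else 0) 0)"
    using \<open>k > 0\<close> by simp
  then show ?case
    unfolding run_Nil using net_approximable_exec_Assign[OF \<open>k > 0\<close>] cube_ucont_map_exec by blast
next
  case (Cons i P)
  then have hd: "net_approximable k (exec k i)" "cube_ucont_map k (exec k i)"
    and tl: "net_approximable k (run k P)" "cube_ucont_map k (run k P)"
    by auto
  have "run k (i # P) = (\<lambda>v. run k P (exec k i v))" by (simp add: fun_eq_iff)
  then show ?case
    using net_approximable_comp[OF hd(1) tl(1) hd(2) tl(2)] cube_ucont_map_comp[OF hd(2) tl(2)] by simp
qed

lemma net_approximable_Add_square:
  assumes ok: "instr_ok k (Add_square t s a c l)"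
  shows "net_approximable k (exec k (Add_square t s a c l))"
proof (rule net_approximable_limit)
  fix R \<eta> :: real assume "\<eta> > 0"
  have ok': "t < k" "s < k" "t \<noteq> s" "a t = 0" "a s = 0" using ok by auto
  obtain C where C: "\<forall>v\<in>cube k R. \<bar>affine_form k a c v\<bar> \<le> C"
    using cube_ucont_bounded[OF cube_ucont_affine_form] by blast
  obtain L where L: "\<forall>x. \<bar>x\<bar> \<le> max C 1 \<longrightarrow> \<bar>sigma_sum L x - x\<^sup>2\<bar> \<le> \<eta> / (\<bar>l\<bar> + 1)"
    using square_approx[of "max C 1" "\<eta> / (\<bar>l\<bar> + 1)"] \<open>\<eta> > 0\<close> by (auto simp: less_max_iff_disj)
  define P where "P = square_prog t s a c l L @ [Assign s (\<lambda>i. 0) 0]"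
  have "net_approximable k (exec k i) \<and> cube_ucont_map k (exec k i)" if "i \<in> set P" for i
  proof -
    obtain j a' c' where "j < k" "i = Assign j a' c' \<or> i = Activate j a' c'"
      using \<open>i \<in> set P\<close> ok' by (auto simp: P_def square_prog_def)
    then show ?thesis
      using net_approximable_exec_Assign net_approximable_exec_Activate cube_ucont_map_exec[of k i] by auto
  qed
  then have P: "net_approximable k (run k P)"
    using net_approximable_cube_ucont_map_run[of k P] ok' by auto
  have run_P: "run k P v = (v(t := v t + l * sigma_sum L (affine_form k a c v)))(s := 0)" for v
    using run_square_prog[OF ok', of c l L v] by (auto simp: P_def run_append)
  have "\<bar>run k P v i - exec k (Add_square t s a c l) v i\<bar> \<le> \<eta>" if v: "v \<in> cube k R" for v i
  proof (cases "i = t")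
    case True
    have "\<bar>run k P v i - exec k (Add_square t s a c l) v i\<bar> =
        \<bar>l\<bar> * \<bar>sigma_sum L (affine_form k a c v) - (affine_form k a c v)\<^sup>2\<bar>"
      using True ok' by (simp add: run_P abs_mult[symmetric] algebra_simps)
    also have "\<dots> \<le> \<bar>l\<bar> * (\<eta> / (\<bar>l\<bar> + 1))"
      using L C v by (intro mult_left_mono) (auto simp: le_max_iff_disj)
    also have "\<dots> \<le> \<eta>" using \<open>\<eta> > 0\<close> by (simp add: field_simps)
    finally show ?thesis .
  next
    case False
    then show ?thesis using \<open>\<eta> > 0\<close> by (simp add: run_P)
  qed
  then show "\<exists>\<Psi>'. net_approximable k \<Psi>' \<and>
      (\<forall>v\<in>cube k R. \<forall>i<k. \<bar>\<Psi>' v i - exec k (Add_square t s a c l) v i\<bar> \<le> \<eta>)"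
    using P by blast
qed

lemma net_approximable_run:
  assumes "k > 0" "\<And>i. i \<in> set P \<Longrightarrow> instr_ok k i"
  shows "net_approximable k (run k P)"
proof -
  have "net_approximable k (exec k i)" if "instr_ok k i" for i
  proof (cases i)
    case (Assign s a c)
    then show ?thesis using that net_approximable_exec_Assign by simp
  next
    case (Activate s a c)
    then show ?thesis using that net_approximable_exec_Activate by simp
  next
    case (Add_square t s a c l)
    then show ?thesis using that net_approximable_Add_square by simp
  qed
  then show ?thesis
    using net_approximable_cube_ucont_map_run[of k P] cube_ucont_map_exec assms by blast
qed

end

section \<open>Sums of polynomials of the inputs\<close>

definition coeff_pair :: "nat \<Rightarrow> nat \<Rightarrow> real \<Rightarrow> real \<Rightarrow> nat \<Rightarrow> real" where
  "coeff_pair a r x y = (\<lambda>i. if i = a then x else if i = r then y else 0)"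

text \<open>One Horner step \<open>a := c + a * r\<close>, computed in register \<open>b\<close> through
  \<open>a * r = ((a + r)\<^sup>2 - (a - r)\<^sup>2) / 4\<close>.\<close>

fun horner_prog :: "nat \<Rightarrow> nat \<Rightarrow> nat \<Rightarrow> nat \<Rightarrow> real list \<Rightarrow> instr list" where
  "horner_prog r a b s [] = [Assign a (\<lambda>i. 0) 0]"
| "horner_prog r a b s (c # cs) = horner_prog r a b s cs @
     [Assign b (\<lambda>i. 0) c, Add_square b s (coeff_pair a r 1 1) 0 (1/4), Add_square b s (coeff_pair a r 1 (-1)) 0 (-1/4),
      Assign a (\<lambda>i. if i = b then 1 else 0) 0]"

lemma horner_prog_ok:
  assumes "r < k" "a < k" "b < k" "s < k" "distinct [r, a, b, s]"
  shows "i \<in> set (horner_prog r a b s cs) \<Longrightarrow> instr_ok k i"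
  using assms by (induction cs) (auto simp: coeff_pair_def)

text \<open>Register layout for \<open>n\<close> inputs and \<open>m\<close> outputs: inputs in \<open>0..<n\<close>, outputs in \<open>n..<n+m\<close>,
  the Horner accumulator in \<open>n + m\<close> and the scratch register of \<open>Add_square\<close> in \<open>n + m + 1\<close>.
  The Horner temporary is input register \<open>0\<close>, which is no longer needed once input \<open>0\<close> has been
  processed; while processing input \<open>0\<close> it is the output register that is about to be overwritten.\<close>

definition poly_term_prog :: "nat \<Rightarrow> nat \<Rightarrow> (nat \<Rightarrow> nat \<Rightarrow> real list) \<Rightarrow> nat \<Rightarrow> nat \<Rightarrow> instr list" where
  "poly_term_prog n m cs q i = horner_prog q (n + m) (if q = 0 then n + i else 0) (n + m + 1) (cs i q) @
     [Assign (n + i) (coeff_pair (n + i) (n + m) (if q = 0 then 0 else 1) 1) 0]"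

definition poly_sum_prog :: "nat \<Rightarrow> nat \<Rightarrow> (nat \<Rightarrow> nat \<Rightarrow> real list) \<Rightarrow> instr list" where
  "poly_sum_prog n m cs = concat (map (\<lambda>q. concat (map (poly_term_prog n m cs q) [0..<m])) [0..<n])"

lemma poly_sum_prog_ok:
  assumes "x \<in> set (poly_sum_prog n m cs)"
  shows "instr_ok (n + m + 2) x"
proof -
  obtain q i where qi: "q < n" "i < m" "x \<in> set (poly_term_prog n m cs q i)"
    using assms by (auto simp: poly_sum_prog_def)
  then show ?thesis
    using horner_prog_ok[of q "n + m + 2" "n + m" "if q = 0 then n + i else 0" "n + m + 1" _ "cs i q"]
    by (auto simp: poly_term_prog_def)
qed

context activation
begin

lemma run_horner_prog:
  assumes k: "r < k" "a < k" "b < k" "s < k" and d: "distinct [r, a, b, s]"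
  shows "run k (horner_prog r a b s cs) v a = horner_sum id (v r) cs \<and>
         (\<forall>i. i \<noteq> a \<and> i \<noteq> b \<and> i \<noteq> s \<longrightarrow> run k (horner_prog r a b s cs) v i = v i)"
proof (induction cs)
  case Nil
  then show ?case by simp
next
  case (Cons c cs)
  define w where "w = run k (horner_prog r a b s cs) v"
  have wa: "w a = horner_sum id (v r) cs"
    and wo: "\<And>i. i \<noteq> a \<Longrightarrow> i \<noteq> b \<Longrightarrow> i \<noteq> s \<Longrightarrow> w i = v i"
    using Cons unfolding w_def by blast+
  have wr: "w r = v r" using wo d by simp
  have sum: "affine_form k (coeff_pair a r 1 1) 0 u = u a + u r"
    and diff: "affine_form k (coeff_pair a r 1 (-1)) 0 u = u a - u r"
    and copy: "affine_form k (\<lambda>i. if i = b then 1 else 0) 0 u = u b" for u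
    using k d by (simp_all add: coeff_pair_def affine_form_two_coords affine_form_coord)
  have "run k (horner_prog r a b s (c # cs)) v =
      run k [Assign b (\<lambda>i. 0) c, Add_square b s (coeff_pair a r 1 1) 0 (1/4),
        Add_square b s (coeff_pair a r 1 (-1)) 0 (-1/4), Assign a (\<lambda>i. if i = b then 1 else 0) 0] w"
    unfolding w_def by (simp only: horner_prog.simps run_append)
  also have "\<dots> = (w(b := c + w a * w r, s := 0))(a := c + w a * w r)"
  proof -
    have "(w a + w r)\<^sup>2 / 4 - (w a - w r)\<^sup>2 / 4 = w a * w r"
      by (simp add: power2_eq_square field_simps)
    then show ?thesis
      using d by (simp add: sum diff copy fun_upd_twist flip: add_diff_eq)
  qed
  finally have step: "run k (horner_prog r a b s (c # cs)) v = (w(b := c + w a * w r, s := 0))(a := c + w a * w r)" .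
  show ?case
  proof
    show "run k (horner_prog r a b s (c # cs)) v a = horner_sum id (v r) (c # cs)"
      using wa wr unfolding step by (simp add: mult.commute)
    show "\<forall>i. i \<noteq> a \<and> i \<noteq> b \<and> i \<noteq> s \<longrightarrow> run k (horner_prog r a b s (c # cs)) v i = v i"
      using wo unfolding step by simp
  qed
qed

lemma run_concat_map_invariant:
  assumes "\<And>j w. j < N \<Longrightarrow> I j w \<Longrightarrow> I (Suc j) (run k (f j) w)" "I 0 v"
  shows "I N (run k (concat (map f [0..<N])) v)"
  using assms(1) by (induction N) (simp_all add: assms(2) run_append)

lemma run_poly_term_prog:
  assumes q: "q < n" and p: "p < m"
    and outputs: "\<forall>i<m. w (n + i) = T i + (if i < p then horner_sum id (y q) (cs i q) else 0)"
    and first: "q = 0 \<Longrightarrow> \<forall>i<m. T i = 0"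
    and inputs: "\<forall>j. q \<le> j \<and> j < n \<longrightarrow> w j = y j"
  shows "(\<forall>i<m. run (n + m + 2) (poly_term_prog n m cs q p) w (n + i) =
              T i + (if i < Suc p then horner_sum id (y q) (cs i q) else 0)) \<and>
         (\<forall>j. q \<le> j \<and> j < n \<longrightarrow> run (n + m + 2) (poly_term_prog n m cs q p) w j = y j)"
proof -
  define b where "b = (if q = 0 then n + p else 0)"
  define u where "u = run (n + m + 2) (horner_prog q (n + m) b (n + m + 1) (cs p q)) w"
  have "distinct [q, n + m, b, n + m + 1]" using q p by (auto simp: b_def)
  then have u: "u (n + m) = horner_sum id (y q) (cs p q)"
     "\<And>j. j \<noteq> n + m \<Longrightarrow> j \<noteq> b \<Longrightarrow> j \<noteq> n + m + 1 \<Longrightarrow> u j = w j"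
    using run_horner_prog[of q "n + m + 2" "n + m" b "n + m + 1" "cs p q" w] inputs q p
    by (auto simp: u_def b_def)
  have result: "run (n + m + 2) (poly_term_prog n m cs q p) w =
      u(n + p := (if q = 0 then 0 else 1) * u (n + p) + u (n + m))"
    using p by (simp add: poly_term_prog_def run_append u_def b_def coeff_pair_def affine_form_two_coords)
  have "run (n + m + 2) (poly_term_prog n m cs q p) w (n + i) =
      T i + (if i < Suc p then horner_sum id (y q) (cs i q) else 0)" if i: "i < m" for i
  proof (cases "i = p")
    case True
    then show ?thesis
      using first outputs u p q i unfolding result by (cases "q = 0") (auto simp: b_def)
  next
    case False
    then show ?thesis using outputs u(2) i p q unfolding result by (auto simp: b_def)
  qed
  moreover have "run (n + m + 2) (poly_term_prog n m cs q p) w j = y j" if "q \<le> j" "j < n" for j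
    using inputs u(2) that unfolding result by (auto simp: b_def)
  ultimately show ?thesis by blast
qed

lemma run_poly_sum_prog:
  assumes y: "\<And>j. n \<le> j \<Longrightarrow> y j = 0" and i: "i < m"
  shows "run (n + m + 2) (poly_sum_prog n m cs) y (n + i) = (\<Sum>q<n. horner_sum id (y q) (cs i q))"
proof -
  define T where "T i q = (\<Sum>q'<q. horner_sum id (y q') (cs i q'))" for i q
  define I where "I q w \<longleftrightarrow> (\<forall>i<m. w (n + i) = T i q) \<and> (\<forall>j. q \<le> j \<and> j < n \<longrightarrow> w j = y j)" for q w
  have "I (Suc q) (run (n + m + 2) (concat (map (poly_term_prog n m cs q) [0..<m])) w)"
    if q: "q < n" and "I q w" for q w
  proof -
    define J where "J p u \<longleftrightarrow> (\<forall>i<m. u (n + i) = T i q + (if i < p then horner_sum id (y q) (cs i q) else 0)) \<and>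
        (\<forall>j. q \<le> j \<and> j < n \<longrightarrow> u j = y j)" for p u
    have "J m (run (n + m + 2) (concat (map (poly_term_prog n m cs q) [0..<m])) w)"
    proof (rule run_concat_map_invariant)
      show "J (Suc p) (run (n + m + 2) (poly_term_prog n m cs q p) u)" if "p < m" "J p u" for p u
        using that run_poly_term_prog[OF q, of p m u "\<lambda>i. T i q" y cs] by (auto simp: J_def T_def)
    qed (use \<open>I q w\<close> in \<open>simp add: J_def I_def\<close>)
    then show ?thesis by (auto simp: J_def I_def T_def)
  qed
  moreover have "I 0 y"
    using y by (simp add: I_def T_def)
  ultimately have "I n (run (n + m + 2) (poly_sum_prog n m cs) y)"
    unfolding poly_sum_prog_def by (rule run_concat_map_invariant)
  then show ?thesis using i by (simp add: I_def T_def)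
qed

end

lemma (in activation) poly_sum_network:
  assumes "\<eta> > 0"
  shows "\<exists>\<Phi>. is_network \<sigma> n m (n + m + 2) \<Phi> \<and>
    (\<forall>y\<in>cube n R. \<forall>i<m. \<bar>\<Phi> y i - (\<Sum>q<n. horner_sum id (y q) (cs i q))\<bar> \<le> \<eta>)"
proof -
  define k where "k = n + m + 2"
  have "net_approximable k (run k (poly_sum_prog n m cs))"
    unfolding k_def using poly_sum_prog_ok by (intro net_approximable_run) auto
  then obtain \<Phi>0 where \<Phi>0: "is_network \<sigma> k k k \<Phi>0"
      "\<forall>v\<in>cube k (max R 0). \<forall>i<k. \<bar>\<Phi>0 v i - run k (poly_sum_prog n m cs) v i\<bar> \<le> \<eta>"
    using net_approximableD assms by blast
  obtain \<Phi> where \<Phi>: "is_network \<sigma> n m k \<Phi>" "\<forall>y. (\<forall>j\<ge>n. y j = 0) \<longrightarrow> (\<forall>i<m. \<Phi> y i = \<Phi>0 y (n + i))"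
    using is_network_restrict[OF \<Phi>0(1), of n n m] by (auto simp: k_def)
  have "\<bar>\<Phi> y i - (\<Sum>q<n. horner_sum id (y q) (cs i q))\<bar> \<le> \<eta>" if y: "y \<in> cube n R" and i: "i < m" for y i
  proof -
    have "\<bar>y j\<bar> \<le> max R 0" for j
      using y by (cases "j < n") (auto simp: cube_def)
    then have "y \<in> cube k (max R 0)"
      using y by (auto simp: cube_def k_def)
    then have "\<bar>\<Phi>0 y (n + i) - run k (poly_sum_prog n m cs) y (n + i)\<bar> \<le> \<eta>"
      using \<Phi>0(2) i by (simp add: k_def)
    moreover have "run k (poly_sum_prog n m cs) y (n + i) = (\<Sum>q<n. horner_sum id (y q) (cs i q))"
      unfolding k_def using y i by (intro run_poly_sum_prog) (auto simp: cube_def)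
    ultimately show ?thesis
      using \<Phi>(2) y i by (simp add: cube_def)
  qed
  then show ?thesis using \<Phi>(1) unfolding k_def by blast
qed

lemma Tietze_extension_components:
  fixes g :: "'x::metric_space \<Rightarrow> nat \<Rightarrow> real"
  assumes "closed K" "K \<subseteq> T" "\<And>i. i < m \<Longrightarrow> continuous_on K (\<lambda>x. g x i)"
  shows "\<exists>G. \<forall>i<m. continuous_on T (G i) \<and> (\<forall>x\<in>K. G i x = g x i)"
proof -
  have "\<exists>G. continuous_on T G \<and> (\<forall>x\<in>K. G x = g x i)" if "i < m" for i
  proof -
    have "normal_space (top_of_set T)"
      by (intro metrizable_imp_normal_space metrizable_space_subtopology metrizable_space_euclidean)
    moreover have "closedin (top_of_set T) K"
      using assms(1,2) by (simp add: closed_subset)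
    moreover have "continuous_map (subtopology (top_of_set T) K) euclideanreal (\<lambda>x. g x i)"
      using assms(2,3) that by (simp add: subtopology_subtopology Int_absorb1)
    ultimately obtain G where "continuous_map (top_of_set T) euclideanreal G" "\<And>x. x \<in> K \<Longrightarrow> G x = g x i"
      using Tietze_extension_realinterval[of "top_of_set T" K UNIV "\<lambda>x. g x i"] by auto
    then show ?thesis by auto
  qed
  then show ?thesis by metis
qed

lemma horner_sum_uniform_approx:
  fixes h :: "real \<Rightarrow> real"
  assumes "continuous_on {a..b} h" "e > 0"
  shows "\<exists>cs. \<forall>t\<in>{a..b}. \<bar>horner_sum id t cs - h t\<bar> < e"
proof -
  obtain p where "real_polynomial_function p" "\<And>t. t \<in> {a..b} \<Longrightarrow> \<bar>h t - p t\<bar> < e"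
    using Stone_Weierstrass_real_polynomial_function[OF compact_Icc assms] by blast
  moreover obtain c N where "p = (\<lambda>t. \<Sum>i\<le>N. c i * t ^ i)"
    using calculation(1) real_polynomial_function_iff_sum by blast
  moreover have "horner_sum id t (map c [0..<Suc N]) = (\<Sum>i\<le>N. c i * t ^ i)" for t
    by (simp add: horner_sum_eq_sum atLeast0LessThan lessThan_Suc_atMost del: upt_Suc)
  ultimately show ?thesis by (metis abs_minus_commute)
qed

lemma outer_polynomial_approx:
  fixes G :: "nat \<Rightarrow> 'x \<Rightarrow> real" and Y :: "'x \<Rightarrow> nat \<Rightarrow> real"
  assumes outer: "\<And>i. i < m \<Longrightarrow> \<exists>h. (\<forall>q<n. continuous_on UNIV (h q)) \<and> (\<forall>x\<in>T. G i x = (\<Sum>q<n. h q (Y x q)))"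
    and range: "\<And>x q. x \<in> T \<Longrightarrow> q < n \<Longrightarrow> Y x q \<in> {a..b}" and "\<eta> > 0"
  shows "\<exists>cs. \<forall>i<m. \<forall>x\<in>T. \<bar>G i x - (\<Sum>q<n. horner_sum id (Y x q) (cs i q))\<bar> \<le> \<eta>"
proof -
  obtain h where h: "\<And>i. i < m \<Longrightarrow> (\<forall>q<n. continuous_on UNIV (h i q)) \<and> (\<forall>x\<in>T. G i x = (\<Sum>q<n. h i q (Y x q)))"
    using outer by metis
  have "\<eta> / (real n + 1) > 0" using \<open>\<eta> > 0\<close> by simp
  then have "\<forall>i q. \<exists>c. i < m \<and> q < n \<longrightarrow> (\<forall>t\<in>{a..b}. \<bar>horner_sum id t c - h i q t\<bar> < \<eta> / (real n + 1))"
    using h horner_sum_uniform_approx continuous_on_subset by (metis subset_UNIV)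
  then obtain cs where cs: "\<And>i q. i < m \<Longrightarrow> q < n \<Longrightarrow>
      \<forall>t\<in>{a..b}. \<bar>horner_sum id t (cs i q) - h i q t\<bar> < \<eta> / (real n + 1)"
    by metis
  have "\<bar>G i x - (\<Sum>q<n. horner_sum id (Y x q) (cs i q))\<bar> \<le> \<eta>" if "i < m" "x \<in> T" for i x
  proof -
    have "\<bar>G i x - (\<Sum>q<n. horner_sum id (Y x q) (cs i q))\<bar> \<le>
        (\<Sum>q<n. \<bar>h i q (Y x q) - horner_sum id (Y x q) (cs i q)\<bar>)"
      using h that by (simp add: sum_subtractf[symmetric] sum_abs)
    also have "\<dots> \<le> (\<Sum>q<n. \<eta> / (real n + 1))"
      using cs range that by (intro sum_mono) (force simp: abs_minus_commute)
    also have "\<dots> \<le> \<eta>"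
      using \<open>\<eta> > 0\<close> by (simp add: field_simps)
    finally show ?thesis .
  qed
  then show ?thesis by blast
qed

lemma (in activation) network_approx_outer_representation:
  fixes G :: "nat \<Rightarrow> 'x \<Rightarrow> real" and Y :: "'x \<Rightarrow> nat \<Rightarrow> real"
  assumes outer: "\<And>i. i < m \<Longrightarrow> \<exists>h. (\<forall>q<n. continuous_on UNIV (h q)) \<and> (\<forall>x\<in>T. G i x = (\<Sum>q<n. h q (Y x q)))"
    and range: "\<And>x q. x \<in> T \<Longrightarrow> q < n \<Longrightarrow> \<bar>Y x q\<bar> \<le> R" and "\<eta> > 0"
  shows "\<exists>\<Phi>. is_network \<sigma> n m (n + m + 2) \<Phi> \<and>
    (\<forall>x\<in>T. \<forall>i<m. \<bar>G i x - \<Phi> (\<lambda>q. if q < n then Y x q else 0) i\<bar> \<le> \<eta>)"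
proof -
  have Y_range: "Y x q \<in> {-R..R}" if "x \<in> T" "q < n" for x q
    using range[OF that] by (simp add: abs_le_iff)
  obtain cs where cs: "\<forall>i<m. \<forall>x\<in>T. \<bar>G i x - (\<Sum>q<n. horner_sum id (Y x q) (cs i q))\<bar> \<le> \<eta> / 2"
    using outer_polynomial_approx[where m = m and G = G and Y = Y and \<eta> = "\<eta> / 2", OF outer Y_range] \<open>\<eta> > 0\<close>
    by auto
  obtain \<Phi> where \<Phi>: "is_network \<sigma> n m (n + m + 2) \<Phi>"
      "\<forall>y\<in>cube n R. \<forall>i<m. \<bar>\<Phi> y i - (\<Sum>q<n. horner_sum id (y q) (cs i q))\<bar> \<le> \<eta> / 2"
    using poly_sum_network[where \<eta> = "\<eta> / 2" and n = n and m = m and R = R and cs = cs] \<open>\<eta> > 0\<close>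
    by auto
  have "\<bar>G i x - \<Phi> (\<lambda>q. if q < n then Y x q else 0) i\<bar> \<le> \<eta>" if "x \<in> T" "i < m" for x i
  proof -
    let ?y = "\<lambda>q. if q < n then Y x q else 0" and ?P = "\<Sum>q<n. horner_sum id (Y x q) (cs i q)"
    have "?y \<in> cube n R" using range \<open>x \<in> T\<close> by (simp add: cube_def)
    moreover have "(\<Sum>q<n. horner_sum id (?y q) (cs i q)) = ?P" by (intro sum.cong) auto
    ultimately have "\<bar>\<Phi> ?y i - ?P\<bar> \<le> \<eta> / 2" using \<Phi>(2) \<open>i < m\<close> by metis
    moreover have "\<bar>G i x - ?P\<bar> \<le> \<eta> / 2" using cs that by blast
    ultimately show ?thesis by linarith
  qed
  then show ?thesis using \<Phi>(1) by blast
qed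

lemma abs_sum_unit_interval_le:
  assumes "\<And>p. p < n0 \<Longrightarrow> \<phi> p \<in> {0..1}"
  shows "\<bar>\<Sum>p<n0. \<phi> p\<bar> \<le> real n0"
  using assms sum_bounded_above[of "{..<n0}" \<phi> 1] sum_nonneg[of "{..<n0}" \<phi>] by auto

lemma euclid_norm_le:
  assumes "E \<ge> 0" "\<And>i. i < m \<Longrightarrow> \<bar>v i\<bar> \<le> E"
  shows "euclid_norm m v \<le> sqrt (real m) * E"
proof -
  have "(\<Sum>i<m. (v i)\<^sup>2) \<le> (\<Sum>i<m. E\<^sup>2)"
    using assms by (intro sum_mono) (metis abs_ge_zero lessThan_iff power2_abs power_mono)
  then have "euclid_norm m v \<le> sqrt (real m * E\<^sup>2)"
    unfolding euclid_norm_def by simp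
  also have "\<dots> = sqrt (real m) * E"
    using assms(1) by (simp add: real_sqrt_mult)
  finally show ?thesis .
qed

theorem theorem3p4:
  fixes n0 :: nat
    and X :: "nat \<Rightarrow> 'a::metric_space set"
    and d :: "nat \<Rightarrow> nat"
    and M :: nat
    and \<psi> :: "nat \<Rightarrow> nat \<Rightarrow> 'a \<Rightarrow> real"
    and s :: "nat \<Rightarrow> (nat \<Rightarrow> 'a) \<Rightarrow> real"
    and F :: "(nat \<Rightarrow> 'a) \<Rightarrow> (nat \<Rightarrow> real)"
    and \<A> :: "((nat \<Rightarrow> 'a) \<Rightarrow> real) set"
    and \<sigma> :: "real \<Rightarrow> real"
    and t0 :: real and U :: "real set"
    and m :: nat and K :: "(nat \<Rightarrow> 'a) set"
    and g :: "(nat \<Rightarrow> 'a) \<Rightarrow> (nat \<Rightarrow> real)"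
    and \<epsilon> :: real
  assumes n0_pos: "n0 \<ge> 1"
    and X_compact: "\<And>p. p < n0 \<Longrightarrow> compact (X p)"
    and X_dim: "\<And>p. p < n0 \<Longrightarrow> has_top_dim (X p) (d p)"
    and M_def: "M = (\<Sum>p<n0. d p)"
    and \<psi>_cont: "\<And>p q. p < n0 \<Longrightarrow> q < 2*M+1 \<Longrightarrow> continuous_on (X p) (\<psi> p q)"
    and \<psi>_range: "\<And>p q. p < n0 \<Longrightarrow> q < 2*M+1 \<Longrightarrow> \<psi> p q ` X p \<subseteq> {0..1}"
    and KA: "\<And>f. continuous_on (PiE {..<n0} X) f \<Longrightarrow>
               (\<exists>h :: nat \<Rightarrow> real \<Rightarrow> real. (\<forall>q<2*M+1. continuous_on UNIV (h q)) \<and>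
                  (\<forall>x\<in>PiE {..<n0} X. f x = (\<Sum>q<2*M+1. h q (\<Sum>p<n0. \<psi> p q (x p)))))"
    and s_def: "\<And>q x. s q x = (\<Sum>p<n0. \<psi> p q (x p))"
    and F_def: "\<And>x. F x = (\<lambda>q. if q < 2*M+1 then s q x else 0)"
    and A_sub: "\<forall>f\<in>\<A>. continuous_on (PiE {..<n0} X) f"
    and A_s: "\<And>q. q < 2*M+1 \<Longrightarrow> s q \<in> \<A>"
    and \<sigma>_cont: "continuous_on UNIV \<sigma>"
    and \<sigma>_nonaffine: "\<not> (\<exists>a b. \<forall>t. \<sigma> t = a * t + b)"
    and U_open: "open U" and t0_U: "t0 \<in> U"
    and \<sigma>_diff: "\<And>t. t \<in> U \<Longrightarrow> \<sigma> differentiable (at t)"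
    and \<sigma>'_cont: "isCont (deriv \<sigma>) t0"
    and \<sigma>'_nz: "deriv \<sigma> t0 \<noteq> 0"
    and m_pos: "m \<ge> 1"
    and K_compact: "compact K" and K_sub: "K \<subseteq> PiE {..<n0} X"
    and g_cont: "\<And>i. i < m \<Longrightarrow> continuous_on K (\<lambda>x. g x i)"
    and \<epsilon>_pos: "\<epsilon> > 0"
  shows "\<exists>H \<in> NN (2*M+m+3) m (PiE {..<n0} X) \<sigma> (2*M+1) F.
           \<exists>\<delta> < \<epsilon>. \<forall>x\<in>K. euclid_norm m (\<lambda>i. g x i - H x i) \<le> \<delta>"
proof -
  interpret activation \<sigma> t0 "deriv \<sigma> t0"
    using \<sigma>_cont \<sigma>_nonaffine \<sigma>'_nz \<sigma>_diff[OF t0_U]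
    by unfold_locales (auto simp: DERIV_deriv_iff_real_differentiable)
  define n where "n = 2 * M + 1"
  define E where "E = \<epsilon> / (2 * sqrt (real m))"
  have E: "E > 0" using \<epsilon>_pos m_pos by (simp add: E_def)
  have "\<exists>G. \<forall>i<m. continuous_on (PiE {..<n0} X) (G i) \<and> (\<forall>x\<in>K. G i x = g x i)"
    using K_sub g_cont by (intro Tietze_extension_components compact_imp_closed K_compact)
  then obtain G where G: "\<forall>i<m. continuous_on (PiE {..<n0} X) (G i) \<and> (\<forall>x\<in>K. G i x = g x i)"
    by blast
  have outer: "\<exists>h. (\<forall>q<n. continuous_on UNIV (h q)) \<and> (\<forall>x\<in>PiE {..<n0} X. G i x = (\<Sum>q<n. h q (s q x)))"
    if "i < m" for i
    using KA G that by (simp add: n_def s_def)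
  have range: "\<bar>s q x\<bar> \<le> real n0" if "x \<in> PiE {..<n0} X" "q < n" for x q
    unfolding s_def using \<psi>_range that by (intro abs_sum_unit_interval_le) (force simp: n_def PiE_iff)
  obtain \<Phi> where \<Phi>: "is_network \<sigma> n m (n + m + 2) \<Phi>"
      "\<forall>x\<in>PiE {..<n0} X. \<forall>i<m. \<bar>G i x - \<Phi> (\<lambda>q. if q < n then s q x else 0) i\<bar> \<le> E"
    using network_approx_outer_representation[where m = m and G = G and Y = "\<lambda>x q. s q x", OF outer range E]
    by blast
  have "euclid_norm m (\<lambda>i. g x i - \<Phi> (F x) i) \<le> \<epsilon> / 2" if "x \<in> K" for x
  proof -
    have "\<bar>g x i - \<Phi> (F x) i\<bar> \<le> E" if "i < m" for i
    proof -
      have "g x i = G i x" using G \<open>x \<in> K\<close> that by simp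
      moreover have "F x = (\<lambda>q. if q < n then s q x else 0)" by (simp add: F_def n_def)
      ultimately show ?thesis using \<Phi>(2) K_sub \<open>x \<in> K\<close> that by auto
    qed
    then show ?thesis
      using euclid_norm_le[of E m] E m_pos by (simp add: E_def)
  qed
  moreover have "(\<lambda>x. \<Phi> (F x)) \<in> NN (2*M+m+3) m (PiE {..<n0} X) \<sigma> (2*M+1) F"
    using \<Phi>(1) by (auto simp: NN_def n_def numeral_eq_Suc)
  ultimately show ?thesis
    using \<epsilon>_pos by (intro bexI[of _ "\<lambda>x. \<Phi> (F x)"] exI[of _ "\<epsilon> / 2"]) auto
qed

end
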